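(* Let $\Lambda=K\mathcal{Q}/I$ be a finite-dimensional algebra over a field $K$ as in the context, let $A\geqslant 1$, and let $\tilde{\Lambda}=\tilde{\Lambda}_A$ be its stretched algebra. Let $\varepsilon=\sum_{v\in\mathcal{Q}_0}v\in\tilde{\Lambda}$. Then $\langle\varepsilon\rangle=\tilde{\Lambda}\varepsilon\tilde{\Lambda}$ is a stratifying ideal of $\tilde{\Lambda}$.
   Context: Conventions: $\mathcal{Q}$ is a finite quiver with vertex set $\mathcal{Q}_0$; $\mathfrak{o}(\alpha)$, $\mathfrak{t}(\alpha)$ denote start and end of an arrow; paths are written left to right. An element $x\in K\mathcal{Q}$ is uniform if $x=vx=xv'$ for vertices $v,v'$. $\Lambda=K\mathcal{Q}/I$ is finite-dimensional with $I$ an admissible ideal generated by a minimal set $\{g^2_1,\dots,g^2_m\}$ of uniform elements. Stretched algebra: for $A\geqslant1$, the quiver $\tilde{\mathcal{Q}}_A$ has all vertices of $\mathcal{Q}$ plus, for each arrow $\alpha$ of $\mathcal{Q}$, new vertices $w_1,\dots,w_{A-1}$; each arrow $\alpha$ is replaced by arrows $\alpha_1,\dots,\alpha_A$ with $\mathfrak{o}(\alpha_1)=\mathfrak{o}(\alpha)$, $\mathfrak{t}(\alpha_j)=\mathfrak{o}(\alpha_{j+1})=w_j$ ($1\le j\le A-1$), $\mathfrak{t}(\alpha_A)=\mathfrak{t}(\alpha)$, and the only arrows incident with $w_j$ are $\alpha_j,\alpha_{j+1}$. $\theta^*:K\mathcal{Q}\to K\tilde{\mathcal{Q}}_A$ is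 the algebra homomorphism fixing vertices and sending $\alpha\mapsto\alpha_1\cdots\alpha_A$; $\tilde{I}_A$ is the ideal generated by $\theta^*(g^2_1),\dots,\theta^*(g^2_m)$; $\tilde{\Lambda}_A=K\tilde{\mathcal{Q}}_A/\tilde{I}_A$. For a finite-dimensional algebra $B$ and idempotent $e$, the ideal $\langle e\rangle=BeB$ is stratifying if (1) the multiplication map $Be\otimes_{eBe}eB\to BeB$ is an isomorphism and (2) $\mathrm{Tor}^{eBe}_n(Be,eB)=0$ for all $n>0$. *)

theory Defs
  imports Main
begin

text \<open>Elements of K-vector spaces are modelled as functions into the field 'k.
  lspan X is the K-linear span of X (finite linear combinations).\<close>

definition lspan :: "('x \<Rightarrow> 'k::field) set \<Rightarrow> ('x \<Rightarrow> 'k) set" where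
  "lspan X = {f. \<exists>F c. finite F \<and> F \<subseteq> X \<and> f = (\<lambda>u. \<Sum>g\<in>F. c g * g u)}"

definition delta :: "'x \<Rightarrow> 'x \<Rightarrow> 'k::field" where
  "delta t = (\<lambda>u. if u = t then 1 else 0)"

definition lin :: "'k::field \<Rightarrow> ('p \<Rightarrow> 'k) \<Rightarrow> 'k \<Rightarrow> ('p \<Rightarrow> 'k) \<Rightarrow> ('p \<Rightarrow> 'k)" where
  "lin a x b y = (\<lambda>p. a * x p + b * y p)"

text \<open>Given subspaces Ss!0,...,Ss!m of an algebra R (elements are functions 'p => 'k)
  and an ideal J, the tensor product over K of the spaces (Ss!i + J)/J is the free
  vector space on tuples xs in listset Ss modulo the span of tens_rels Ss J
  (multilinearity relations and tuples having an entry in J).\<close>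

definition tens_gens :: "('p \<Rightarrow> 'k::field) set list \<Rightarrow> (('p \<Rightarrow> 'k) list \<Rightarrow> 'k) set" where
  "tens_gens Ss = delta ` listset Ss"

definition tens_rels ::
  "('p \<Rightarrow> 'k::field) set list \<Rightarrow> ('p \<Rightarrow> 'k) set \<Rightarrow> (('p \<Rightarrow> 'k) list \<Rightarrow> 'k) set" where
  "tens_rels Ss J =
     {(\<lambda>u. delta (xs[i := lin a x b y]) u - a * delta (xs[i := x]) u - b * delta (xs[i := y]) u)
       | xs i a b x y. xs \<in> listset Ss \<and> i < length Ss \<and> x \<in> Ss ! i \<and> y \<in> Ss ! i}
   \<union> {delta xs | xs i. xs \<in> listset Ss \<and> i < length xs \<and> xs ! i \<in> J}"

definition mu_map :: "(('p \<Rightarrow> 'k) \<Rightarrow> ('p \<Rightarrow> 'k) \<Rightarrow> ('p \<Rightarrow> 'k))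
    \<Rightarrow> (('p \<Rightarrow> 'k::field) list \<Rightarrow> 'k) \<Rightarrow> ('p \<Rightarrow> 'k)" where
  "mu_map mul z = (\<lambda>p. \<Sum>t\<in>{t. z t \<noteq> 0}. z t * mul (t ! 0) (t ! 1) p)"

definition bar_d :: "(('p \<Rightarrow> 'k) \<Rightarrow> ('p \<Rightarrow> 'k) \<Rightarrow> ('p \<Rightarrow> 'k))
    \<Rightarrow> (('p \<Rightarrow> 'k::field) list \<Rightarrow> 'k) \<Rightarrow> (('p \<Rightarrow> 'k) list \<Rightarrow> 'k)" where
  "bar_d mul z = (\<lambda>u. \<Sum>t\<in>{t. z t \<noteq> 0}. z t *
      (\<Sum>i<length t - 1. (-1) ^ i *
          delta (take i t @ [mul (t ! i) (t ! Suc i)] @ drop (Suc (Suc i)) t) u))"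

text \<open>B = R/J, where R is a K-algebra (carrier of functions 'p => 'k, with multiplication
  mul) and J an ideal; e an idempotent. Representatives: Be ~ {x e}, eBe ~ {e x e},
  eB ~ {e x}. Tor^{eBe}_n(Be,eB) is computed as the homology of the (unnormalised)
  bar complex Be (x)_K (eBe)^{(x) n} (x)_K eB, which is valid since K is a field.\<close>

definition left_mod :: "('p \<Rightarrow> 'k) set \<Rightarrow> (('p \<Rightarrow> 'k) \<Rightarrow> ('p \<Rightarrow> 'k) \<Rightarrow> ('p \<Rightarrow> 'k))
    \<Rightarrow> ('p \<Rightarrow> 'k) \<Rightarrow> ('p \<Rightarrow> 'k) set" where
  "left_mod R mul e = {mul x e | x. x \<in> R}"

definition corner :: "('p \<Rightarrow> 'k) set \<Rightarrow> (('p \<Rightarrow> 'k) \<Rightarrow> ('p \<Rightarrow> 'k) \<Rightarrow> ('p \<Rightarrow> 'k))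
    \<Rightarrow> ('p \<Rightarrow> 'k) \<Rightarrow> ('p \<Rightarrow> 'k) set" where
  "corner R mul e = {mul (mul e x) e | x. x \<in> R}"

definition right_mod :: "('p \<Rightarrow> 'k) set \<Rightarrow> (('p \<Rightarrow> 'k) \<Rightarrow> ('p \<Rightarrow> 'k) \<Rightarrow> ('p \<Rightarrow> 'k))
    \<Rightarrow> ('p \<Rightarrow> 'k) \<Rightarrow> ('p \<Rightarrow> 'k) set" where
  "right_mod R mul e = {mul e x | x. x \<in> R}"

definition bar_mods :: "('p \<Rightarrow> 'k) set \<Rightarrow> (('p \<Rightarrow> 'k) \<Rightarrow> ('p \<Rightarrow> 'k) \<Rightarrow> ('p \<Rightarrow> 'k))
    \<Rightarrow> ('p \<Rightarrow> 'k) \<Rightarrow> nat \<Rightarrow> ('p \<Rightarrow> 'k) set list" where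
  "bar_mods R mul e n = [left_mod R mul e] @ replicate n (corner R mul e) @ [right_mod R mul e]"

definition balanced_rels :: "('p \<Rightarrow> 'k::field) set \<Rightarrow> (('p \<Rightarrow> 'k) \<Rightarrow> ('p \<Rightarrow> 'k) \<Rightarrow> ('p \<Rightarrow> 'k))
    \<Rightarrow> ('p \<Rightarrow> 'k) \<Rightarrow> (('p \<Rightarrow> 'k) list \<Rightarrow> 'k) set" where
  "balanced_rels R mul e =
     {(\<lambda>u. delta [mul m c, n] u - delta [m, mul c n] u) | m c n.
        m \<in> left_mod R mul e \<and> c \<in> corner R mul e \<and> n \<in> right_mod R mul e}"

definition stratifying :: "('p \<Rightarrow> 'k::field) set \<Rightarrow> (('p \<Rightarrow> 'k) \<Rightarrow> ('p \<Rightarrow> 'k) \<Rightarrow> ('p \<Rightarrow> 'k))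
    \<Rightarrow> ('p \<Rightarrow> 'k) set \<Rightarrow> ('p \<Rightarrow> 'k) \<Rightarrow> bool" where
  "stratifying R mul J e \<longleftrightarrow>
     \<comment> \<open>(1a) Be (x)_{eBe} eB -> BeB is surjective\<close>
     (\<forall>y \<in> lspan {mul (mul x e) x' | x x'. x \<in> R \<and> x' \<in> R}.
        \<exists>z \<in> lspan (tens_gens (bar_mods R mul e 0)). (\<lambda>p. mu_map mul z p - y p) \<in> J) \<and>
     \<comment> \<open>(1b) ... and injective\<close>
     (\<forall>z \<in> lspan (tens_gens (bar_mods R mul e 0)).
        mu_map mul z \<in> J \<longrightarrow>
        z \<in> lspan (tens_rels (bar_mods R mul e 0) J \<union> balanced_rels R mul e)) \<and>
     \<comment> \<open>(2) Tor_n^{eBe}(Be, eB) = 0 for n > 0 (bar complex homology)\<close>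
     (\<forall>n\<ge>1. \<forall>z \<in> lspan (tens_gens (bar_mods R mul e n)).
        bar_d mul z \<in> lspan (tens_rels (bar_mods R mul e (n - 1)) J) \<longrightarrow>
        z \<in> lspan (bar_d mul ` tens_gens (bar_mods R mul e (Suc n))
                   \<union> tens_rels (bar_mods R mul e n) J))"

record ('v, 'a) quiver =
  verts :: "'v set"
  arrs :: "'a set"
  src :: "'a \<Rightarrow> 'v"
  tgt :: "'a \<Rightarrow> 'v"

definition finite_quiver :: "('v, 'a) quiver \<Rightarrow> bool" where
  "finite_quiver Q \<longleftrightarrow> finite (verts Q) \<and> finite (arrs Q) \<and>
     (\<forall>\<alpha>\<in>arrs Q. src Q \<alpha> \<in> verts Q \<and> tgt Q \<alpha> \<in> verts Q)"

text \<open>A path is (start vertex, list of arrows), composed left to right; (v, []) is the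
  trivial path at v.\<close>
definition valid_path :: "('v, 'a) quiver \<Rightarrow> 'v \<times> 'a list \<Rightarrow> bool" where
  "valid_path Q p \<longleftrightarrow> (case p of (v, xs) \<Rightarrow>
     v \<in> verts Q \<and> set xs \<subseteq> arrs Q \<and> (xs \<noteq> [] \<longrightarrow> src Q (hd xs) = v) \<and>
     (\<forall>i. Suc i < length xs \<longrightarrow> tgt Q (xs ! i) = src Q (xs ! Suc i)))"

definition path_end :: "('v, 'a) quiver \<Rightarrow> 'v \<times> 'a list \<Rightarrow> 'v" where
  "path_end Q p = (case p of (v, xs) \<Rightarrow> if xs = [] then v else tgt Q (last xs))"

definition path_alg :: "('v, 'a) quiver \<Rightarrow> ('v \<times> 'a list \<Rightarrow> 'k::field) set" where
  "path_alg Q = {f. finite {p. f p \<noteq> 0} \<and> (\<forall>p. f p \<noteq> 0 \<longrightarrow> valid_path Q p)}"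

text \<open>Multiplication in KQ: product of paths is concatenation if composable, else 0.\<close>
definition pmul :: "('v, 'a) quiver \<Rightarrow> ('v \<times> 'a list \<Rightarrow> 'k::field)
    \<Rightarrow> ('v \<times> 'a list \<Rightarrow> 'k) \<Rightarrow> ('v \<times> 'a list \<Rightarrow> 'k)" where
  "pmul Q f g = (\<lambda>(v, zs). \<Sum>i\<le>length zs.
      f (v, take i zs) * g (path_end Q (v, take i zs), drop i zs))"

definition vtx :: "'v \<Rightarrow> ('v \<times> 'a list \<Rightarrow> 'k::field)" where
  "vtx v = delta (v, [])"

definition gen_ideal :: "('v, 'a) quiver \<Rightarrow> ('v \<times> 'a list \<Rightarrow> 'k::field) set
    \<Rightarrow> ('v \<times> 'a list \<Rightarrow> 'k) set" where
  "gen_ideal Q G = lspan {pmul Q (pmul Q x g) y | x g y.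
      x \<in> path_alg Q \<and> g \<in> G \<and> y \<in> path_alg Q}"

definition arrow_pow :: "('v, 'a) quiver \<Rightarrow> nat \<Rightarrow> ('v \<times> 'a list \<Rightarrow> 'k::field) set" where
  "arrow_pow Q k = lspan {delta p | p. valid_path Q p \<and> length (snd p) \<ge> k}"

definition admissible :: "('v, 'a) quiver \<Rightarrow> ('v \<times> 'a list \<Rightarrow> 'k::field) set \<Rightarrow> bool" where
  "admissible Q I \<longleftrightarrow> (\<exists>m\<ge>2. arrow_pow Q m \<subseteq> I \<and> I \<subseteq> arrow_pow Q 2)"

definition uniform :: "('v, 'a) quiver \<Rightarrow> ('v \<times> 'a list \<Rightarrow> 'k::field) \<Rightarrow> bool" where
  "uniform Q x \<longleftrightarrow> (\<exists>v\<in>verts Q. \<exists>v'\<in>verts Q. x = pmul Q (vtx v) x \<and> x = pmul Q x (vtx v'))"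

text \<open>New vertex w_j of arrow alpha is Inr (alpha, j), 1 <= j <= A-1; arrow alpha_j is (alpha, j).\<close>
definition stretch_quiver :: "nat \<Rightarrow> ('v, 'a) quiver \<Rightarrow> ('v + 'a \<times> nat, 'a \<times> nat) quiver" where
  "stretch_quiver A Q =
     \<lparr> verts = Inl ` verts Q \<union> {Inr (\<alpha>, j) | \<alpha> j. \<alpha> \<in> arrs Q \<and> 1 \<le> j \<and> j \<le> A - 1},
       arrs = {(\<alpha>, j) | \<alpha> j. \<alpha> \<in> arrs Q \<and> 1 \<le> j \<and> j \<le> A},
       src = (\<lambda>(\<alpha>, j). if j = 1 then Inl (src Q \<alpha>) else Inr (\<alpha>, j - 1)),
       tgt = (\<lambda>(\<alpha>, j). if j = A then Inl (tgt Q \<alpha>) else Inr (\<alpha>, j)) \<rparr>"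

definition stretch_path :: "nat \<Rightarrow> 'v \<times> 'a list \<Rightarrow> ('v + 'a \<times> nat) \<times> ('a \<times> nat) list" where
  "stretch_path A p = (case p of (v, xs) \<Rightarrow>
     (Inl v, concat (map (\<lambda>\<alpha>. map (\<lambda>j. (\<alpha>, j)) [1..<Suc A]) xs)))"

text \<open>theta*: the linear extension of the path map, i.e. the algebra homomorphism fixing
  vertices and sending alpha to alpha_1 ... alpha_A.\<close>
definition theta :: "nat \<Rightarrow> ('v \<times> 'a list \<Rightarrow> 'k::field)
    \<Rightarrow> (('v + 'a \<times> nat) \<times> ('a \<times> nat) list \<Rightarrow> 'k)" where
  "theta A f = (\<lambda>q. \<Sum>p\<in>{p. f p \<noteq> 0 \<and> stretch_path A p = q}. f p)"

end

(* Every vertex k of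
   the stretched quiver has a unique shortest path rho_k to an original vertex (the trivial
   path, or alpha_(j+1) ... alpha_A for the new vertex w_j on alpha), and every path from k
   that ends at an original vertex starts with rho_k.  Stripping this prefix gives maps
   s_k : Be -> eBe of right eBe-modules with m = sum_k rho_k s_k(m), a dual basis: Be is a
   projective eBe-module.  The s_k preserve the ideal of relations, because the stretched
   relations start at original vertices.

   For any such dual basis, m (x) c_1 (x) ... (x) n  |->  sum_k rho_k (x) s_k(m) (x) c_1 (x) ... (x) n
   is a contracting homotopy of the bar complex computing Tor^eBe(Be, eB), and the same
   rewriting shows that Be (x)_eBe eB -> BeB is injective; it is onto since xe.ex' = xex'. *)

theory Submission
  imports Defs HOL.Modules "HOL-Library.Function_Algebras"
begin

section \<open>Finitely supported functions\<close>

definition fscale :: "'k::field \<Rightarrow> ('x \<Rightarrow> 'k) \<Rightarrow> ('x \<Rightarrow> 'k)" where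
  "fscale c f = (\<lambda>u. c * f u)"

interpretation fspace: module "fscale :: 'k::field \<Rightarrow> ('x \<Rightarrow> 'k) \<Rightarrow> ('x \<Rightarrow> 'k)"
  by standard (auto simp: fscale_def fun_eq_iff algebra_simps)

lemma sum_fun_apply: "(\<Sum>a\<in>T. f a) x = (\<Sum>a\<in>T. f a x)"
  by (induct T rule: infinite_finite_induct) auto

lemma lspan_eq_span: "lspan X = fspace.span X"
  unfolding lspan_def fspace.span_explicit
  by (auto simp: fun_eq_iff sum_fun_apply fscale_def)

lemma lin_eq_fscale: "lin a x b y = fscale a x + fscale b y"
  by (auto simp: lin_def fscale_def fun_eq_iff)

definition finsupp :: "('x \<Rightarrow> 'k::field) \<Rightarrow> bool" where
  "finsupp z \<longleftrightarrow> finite {t. z t \<noteq> 0}"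

definition lin_ext :: "('x \<Rightarrow> 'y \<Rightarrow> 'k::field) \<Rightarrow> ('x \<Rightarrow> 'k) \<Rightarrow> ('y \<Rightarrow> 'k)" where
  "lin_ext \<phi> z = (\<lambda>u. \<Sum>t\<in>{t. z t \<noteq> 0}. z t * \<phi> t u)"

lemma finsupp_add: "finsupp f \<Longrightarrow> finsupp g \<Longrightarrow> finsupp (f + g)"
  unfolding finsupp_def by (rule finite_subset[of _ "{t. f t \<noteq> 0} \<union> {t. g t \<noteq> 0}"]) auto

lemma finsupp_diff: "finsupp f \<Longrightarrow> finsupp g \<Longrightarrow> finsupp (f - g)"
  unfolding finsupp_def by (rule finite_subset[of _ "{t. f t \<noteq> 0} \<union> {t. g t \<noteq> 0}"]) auto

lemma finsupp_fscale: "finsupp f \<Longrightarrow> finsupp (fscale c f)"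
  unfolding finsupp_def fscale_def by (rule finite_subset[of _ "{t. f t \<noteq> 0}"]) auto

lemma finsupp_sum: "(\<And>a. a \<in> T \<Longrightarrow> finsupp (f a)) \<Longrightarrow> finsupp (\<Sum>a\<in>T. f a)"
proof (induct T rule: infinite_finite_induct)
  case (insert x F)
  then show ?case unfolding sum.insert[OF insert.hyps(1,2)] by (intro finsupp_add) auto
qed (simp_all add: finsupp_def)

lemma finsupp_delta: "finsupp (delta t)"
  unfolding finsupp_def delta_def by auto

lemma finsupp_expansion: "finsupp z \<Longrightarrow> z = (\<Sum>t\<in>{t. z t \<noteq> 0}. fscale (z t) (delta t))"
  unfolding finsupp_def
  by (auto simp: fun_eq_iff sum_fun_apply fscale_def delta_def if_distrib sum.delta cong: if_cong)

lemma lin_ext_eq: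
  "finite S \<Longrightarrow> {t. z t \<noteq> 0} \<subseteq> S \<Longrightarrow> lin_ext \<phi> z = (\<lambda>u. \<Sum>t\<in>S. z t * \<phi> t u)"
  unfolding lin_ext_def by (auto simp: fun_eq_iff intro!: sum.mono_neutral_left)

lemma lin_ext_add:
  assumes f: "finsupp f" and g: "finsupp g"
  shows "lin_ext \<phi> (f + g) = lin_ext \<phi> f + lin_ext \<phi> g"
proof -
  let ?S = "{t. f t \<noteq> 0} \<union> {t. g t \<noteq> 0}"
  have fin: "finite ?S" using f g unfolding finsupp_def by auto
  have "lin_ext \<phi> h = (\<lambda>u. \<Sum>t\<in>?S. h t * \<phi> t u)" if "h \<in> {f, g, f + g}" for h
    using that by (intro lin_ext_eq[OF fin]) auto
  then show ?thesis by (simp add: fun_eq_iff sum.distrib algebra_simps)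
qed

lemma lin_ext_fscale: "lin_ext \<phi> (fscale c f) = fscale c (lin_ext \<phi> f)"
proof (cases "c = 0")
  case True
  then show ?thesis by (simp add: fscale_def lin_ext_def fun_eq_iff)
next
  case False
  then have "{t. fscale c f t \<noteq> 0} = {t. f t \<noteq> 0}" by (auto simp: fscale_def)
  then show ?thesis
    unfolding lin_ext_def by (simp add: fscale_def sum_distrib_left mult.assoc fun_eq_iff)
qed

lemma lin_ext_sum:
  "(\<And>a. a \<in> T \<Longrightarrow> finsupp (f a)) \<Longrightarrow> lin_ext \<phi> (\<Sum>a\<in>T. f a) = (\<Sum>a\<in>T. lin_ext \<phi> (f a))"
proof (induct T rule: infinite_finite_induct)
  case (insert x F)
  have "lin_ext \<phi> (f x + sum f F) = lin_ext \<phi> (f x) + lin_ext \<phi> (sum f F)"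
    using insert.prems by (intro lin_ext_add) (auto intro: finsupp_sum)
  also have "lin_ext \<phi> (sum f F) = (\<Sum>a\<in>F. lin_ext \<phi> (f a))"
    using insert by simp
  finally show ?case unfolding sum.insert[OF insert.hyps(1,2)] .
qed (simp_all add: lin_ext_def zero_fun_def)

lemma lin_ext_delta: "lin_ext \<phi> (delta t) = \<phi> t"
proof -
  have "{s. delta t s \<noteq> 0} = {t}" by (auto simp: delta_def)
  then show ?thesis unfolding lin_ext_def by (simp add: delta_def)
qed

lemma lin_ext_diff:
  assumes "finsupp f" "finsupp g"
  shows "lin_ext \<phi> (f - g) = lin_ext \<phi> f - lin_ext \<phi> g"
proof -
  have "f - g = f + fscale (-1) g" by (auto simp: fscale_def fun_eq_iff)
  then have "lin_ext \<phi> (f - g) = lin_ext \<phi> f + fscale (-1) (lin_ext \<phi> g)"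
    using assms by (simp only: lin_ext_add finsupp_fscale lin_ext_fscale)
  also have "\<dots> = lin_ext \<phi> f - lin_ext \<phi> g" by (simp add: fscale_def fun_eq_iff)
  finally show ?thesis .
qed

lemma finsupp_span:
  assumes "\<And>x. x \<in> X \<Longrightarrow> finsupp x" and "z \<in> fspace.span X"
  shows "finsupp z"
proof -
  obtain T r where "finite T" "T \<subseteq> X" "z = (\<Sum>a\<in>T. fscale (r a) a)"
    using assms(2) unfolding fspace.span_explicit by auto
  then show ?thesis using assms(1) by (auto intro!: finsupp_sum finsupp_fscale)
qed

lemma span_delta_image_iff:
  "z \<in> fspace.span (delta ` S) \<longleftrightarrow> finsupp z \<and> {t. z t \<noteq> 0} \<subseteq> S"
proof
  assume z: "z \<in> fspace.span (delta ` S)"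
  then obtain T r where T: "finite T" "T \<subseteq> delta ` S" and zT: "z = (\<Sum>a\<in>T. fscale (r a) a)"
    unfolding fspace.span_explicit by auto
  have "t \<in> S" if "z t \<noteq> 0" for t
  proof -
    have "(\<Sum>a\<in>T. fscale (r a) a t) \<noteq> 0" using that zT by (simp add: sum_fun_apply)
    then obtain a where "a \<in> T" "a t \<noteq> 0"
      by (metis (mono_tags, lifting) mult_zero_right fscale_def sum.neutral)
    then show ?thesis using T by (auto simp: delta_def split: if_splits)
  qed
  moreover have "finsupp z" by (rule finsupp_span[OF _ z]) (auto simp: finsupp_delta)
  ultimately show "finsupp z \<and> {t. z t \<noteq> 0} \<subseteq> S" by blast
next
  assume z: "finsupp z \<and> {t. z t \<noteq> 0} \<subseteq> S"
  then have "(\<Sum>t\<in>{t. z t \<noteq> 0}. fscale (z t) (delta t)) \<in> fspace.span (delta ` S)"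
    by (intro fspace.span_sum fspace.span_scale fspace.span_base) auto
  then show "z \<in> fspace.span (delta ` S)"
    using finsupp_expansion[of z] z by simp
qed

lemma lin_ext_span:
  assumes "z \<in> fspace.span X" and "\<And>x. x \<in> X \<Longrightarrow> finsupp x \<and> lin_ext \<phi> x \<in> fspace.span Y"
  shows "lin_ext \<phi> z \<in> fspace.span Y"
proof -
  obtain T r where T: "finite T" "T \<subseteq> X" and zT: "z = (\<Sum>a\<in>T. fscale (r a) a)"
    using assms(1) unfolding fspace.span_explicit by auto
  have "lin_ext \<phi> z = (\<Sum>a\<in>T. fscale (r a) (lin_ext \<phi> a))"
    unfolding zT using T assms(2) by (subst lin_ext_sum) (auto intro: finsupp_fscale simp: lin_ext_fscale)
  then show ?thesis using T assms(2) by (auto intro!: fspace.span_sum fspace.span_scale)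
qed

section \<open>Tensor relations and the bar differential\<close>

lemma listset_nth: "xs \<in> listset Ss \<Longrightarrow> i < length Ss \<Longrightarrow> xs ! i \<in> Ss ! i"
proof (induct Ss arbitrary: xs i)
  case (Cons S Ss)
  then show ?case by (cases i) (auto simp: set_Cons_def)
qed simp

lemma tens_rels_linI:
  assumes "xs \<in> listset Ss" "i < length Ss" "x \<in> Ss ! i" "y \<in> Ss ! i"
  shows "(\<lambda>u. delta (xs[i := lin a x b y]) u - a * delta (xs[i := x]) u - b * delta (xs[i := y]) u)
     \<in> tens_rels Ss J"
  unfolding tens_rels_def using assms by blast

lemma tens_rels_idealI:
  assumes "xs \<in> listset Ss" "i < length xs" "xs ! i \<in> J"
  shows "delta xs \<in> tens_rels Ss J"
  unfolding tens_rels_def using assms by blast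

lemma finsupp_tens_rels:
  fixes x :: "('p \<Rightarrow> 'k::field) list \<Rightarrow> 'k"
  assumes "x \<in> tens_rels Ss J"
  shows "finsupp x"
proof -
  have "finsupp (\<lambda>u. delta s u - a * delta s' u - b * delta s'' u)"
    for s s' s'' :: "('p \<Rightarrow> 'k) list" and a b :: 'k
    unfolding finsupp_def delta_def by (rule finite_subset[of _ "{s, s', s''}"]) auto
  then show ?thesis using assms unfolding tens_rels_def by (auto simp: finsupp_delta)
qed

lemma tens_rels_sum_in_slot:
  assumes xs: "xs \<in> listset Ss" and i: "i < length Ss" and sub: "fspace.subspace (Ss ! i)"
    and T: "finite T" and xT: "\<And>t. t \<in> T \<Longrightarrow> x t \<in> Ss ! i"
  shows "(\<Sum>t\<in>T. fscale (c t) (delta (xs[i := x t]))) - delta (xs[i := \<Sum>t\<in>T. fscale (c t) (x t)])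
     \<in> fspace.span (tens_rels Ss J)"
  using T xT
proof (induct T rule: finite_induct)
  case empty
  have xi: "xs ! i \<in> Ss ! i" using listset_nth[OF xs i] .
  have "lin 0 (xs ! i) 0 (xs ! i) = 0" by (auto simp: lin_def fun_eq_iff)
  with tens_rels_linI[OF xs i xi xi, of 0 0 J] have "delta (xs[i := 0]) \<in> tens_rels Ss J"
    by simp
  then have "- delta (xs[i := 0]) \<in> fspace.span (tens_rels Ss J)"
    by (intro fspace.span_neg fspace.span_base)
  then show ?case by (simp only: sum.empty diff_0)
next
  case (insert t T)
  define S where "S = (\<Sum>t\<in>T. fscale (c t) (x t))"
  have S: "S \<in> Ss ! i"
    unfolding S_def using insert by (intro fspace.subspace_sum[OF sub] fspace.subspace_scale[OF sub]) auto
  have r: "(\<lambda>u. delta (xs[i := lin (c t) (x t) 1 S]) u - c t * delta (xs[i := x t]) u - 1 * delta (xs[i := S]) u)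
     \<in> tens_rels Ss J"
    using insert by (intro tens_rels_linI[OF xs i _ S]) auto
  have IH: "(\<Sum>t\<in>T. fscale (c t) (delta (xs[i := x t]))) - delta (xs[i := S]) \<in> fspace.span (tens_rels Ss J)"
    using insert unfolding S_def by blast
  have sum_eq: "(\<Sum>t\<in>insert t T. fscale (c t) (x t)) = lin (c t) (x t) 1 S"
    using insert by (simp add: S_def lin_def fscale_def fun_eq_iff sum_fun_apply)
  have split: "(\<Sum>t\<in>insert t T. fscale (c t) (delta (xs[i := x t])))
      - delta (xs[i := \<Sum>t\<in>insert t T. fscale (c t) (x t)])
    = ((\<Sum>t\<in>T. fscale (c t) (delta (xs[i := x t]))) - delta (xs[i := S]))
      - (\<lambda>u. delta (xs[i := lin (c t) (x t) 1 S]) u - c t * delta (xs[i := x t]) u - 1 * delta (xs[i := S]) u)"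
    using insert unfolding sum_eq by (simp add: fscale_def fun_eq_iff sum_fun_apply)
  show ?case unfolding split by (rule fspace.span_diff[OF IH fspace.span_base[OF r]])
qed

definition merge_at :: "('b \<Rightarrow> 'b \<Rightarrow> 'b) \<Rightarrow> nat \<Rightarrow> 'b list \<Rightarrow> 'b list" where
  "merge_at mul i t = take i t @ [mul (t ! i) (t ! Suc i)] @ drop (Suc (Suc i)) t"

lemma merge_at_0: "merge_at mul 0 (x # y # l) = mul x y # l"
  by (simp add: merge_at_def)

lemma merge_at_Suc: "merge_at mul (Suc i) (x # l) = x # merge_at mul i l"
  by (simp add: merge_at_def)

lemma bar_d_eq_lin_ext: "bar_d mul = lin_ext (\<lambda>t. bar_d mul (delta t))"
  and bar_d_delta: "bar_d mul (delta t) = (\<Sum>i<length t - 1. fscale ((-1) ^ i) (delta (merge_at mul i t)))"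
proof -
  have "bar_d mul = lin_ext (\<lambda>t. \<Sum>i<length t - 1. fscale ((-1) ^ i) (delta (merge_at mul i t)))"
    unfolding bar_d_def lin_ext_def merge_at_def by (simp add: fun_eq_iff sum_fun_apply fscale_def)
  then show "bar_d mul = lin_ext (\<lambda>t. bar_d mul (delta t))"
    and "bar_d mul (delta t) = (\<Sum>i<length t - 1. fscale ((-1) ^ i) (delta (merge_at mul i t)))"
    by (simp_all add: lin_ext_delta)
qed

lemma finsupp_bar_d_delta: "finsupp (bar_d mul (delta t))"
  unfolding bar_d_delta by (intro finsupp_sum finsupp_fscale finsupp_delta)

lemma bar_d_delta_Cons2:
  "bar_d mul (delta (x # y # l)) =
     delta (mul x y # l) - (\<Sum>i<length l. fscale ((-1) ^ i) (delta (x # merge_at mul i (y # l))))"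
  unfolding bar_d_delta
  by (simp only: length_Cons diff_Suc_1 sum.lessThan_Suc_shift)
    (simp add: merge_at_Suc merge_at_0 sum_negf)

lemma bar_d_sum:
  "(\<And>a. a \<in> T \<Longrightarrow> finsupp (g a)) \<Longrightarrow> bar_d mul (\<Sum>a\<in>T. g a) = (\<Sum>a\<in>T. bar_d mul (g a))"
  using lin_ext_sum[of T g "\<lambda>t. bar_d mul (delta t)"] by (simp only: bar_d_eq_lin_ext[symmetric])

lemma bar_d_fscale: "bar_d mul (fscale c z) = fscale c (bar_d mul z)"
  using lin_ext_fscale[of "\<lambda>t. bar_d mul (delta t)"] by (simp only: bar_d_eq_lin_ext[symmetric])

lemma bar_d_span:
  assumes "z \<in> fspace.span X" and "\<And>x. x \<in> X \<Longrightarrow> finsupp x"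
  shows "bar_d mul z \<in> fspace.span (bar_d mul ` X)"
  using lin_ext_span[OF assms(1), of "\<lambda>t. bar_d mul (delta t)" "bar_d mul ` X"] assms(2)
  by (simp add: bar_d_eq_lin_ext[symmetric] fspace.span_base)

lemma mu_map_eq_lin_ext: "mu_map mul = lin_ext (\<lambda>t. mul (t ! 0) (t ! 1))"
  unfolding mu_map_def lin_ext_def by (simp add: fun_eq_iff)

section \<open>Stratifying ideals from a dual basis\<close>

lemma mult_map_onto:
  assumes mid: "\<And>x x'. x \<in> R \<Longrightarrow> x' \<in> R \<Longrightarrow> mul (mul x e) (mul e x') = mul (mul x e) x'"
    and "0 \<in> J"
  shows "\<forall>y \<in> lspan {mul (mul x e) x' | x x'. x \<in> R \<and> x' \<in> R}.
     \<exists>z \<in> lspan (tens_gens (bar_mods R mul e 0)). (\<lambda>p. mu_map mul z p - y p) \<in> J"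
proof
  fix y assume "y \<in> lspan {mul (mul x e) x' | x x'. x \<in> R \<and> x' \<in> R}"
  then obtain T r where T: "finite T" "T \<subseteq> {mul (mul x e) x' | x x'. x \<in> R \<and> x' \<in> R}"
    and y: "y = (\<Sum>a\<in>T. fscale (r a) a)"
    unfolding lspan_eq_span fspace.span_explicit by auto
  obtain x x' where xx': "\<And>a. a \<in> T \<Longrightarrow> x a \<in> R \<and> x' a \<in> R \<and> a = mul (mul (x a) e) (x' a)"
    using T(2) by (simp add: subset_iff) metis
  define z where "z = (\<Sum>a\<in>T. fscale (r a) (delta [mul (x a) e, mul e (x' a)]))"
  have "z \<in> lspan (tens_gens (bar_mods R mul e 0))"
    unfolding lspan_eq_span tens_gens_def bar_mods_def z_def
    using xx' by (intro fspace.span_sum fspace.span_scale fspace.span_base imageI)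
      (auto simp: set_Cons_def left_mod_def right_mod_def)
  moreover have mu_z: "mu_map mul z = y"
    unfolding mu_map_eq_lin_ext z_def y using xx'
    by (subst lin_ext_sum) (auto simp: finsupp_fscale finsupp_delta lin_ext_fscale lin_ext_delta mid
        intro!: sum.cong)
  moreover have "(\<lambda>p. mu_map mul z p - y p) = 0" by (simp add: mu_z fun_eq_iff)
  ultimately show "\<exists>z \<in> lspan (tens_gens (bar_mods R mul e 0)). (\<lambda>p. mu_map mul z p - y p) \<in> J"
    using assms(2) by metis
qed

text \<open>The pairs \<open>(\<rho> k, s k)\<close> form a dual basis of \<open>Be\<close> as a right \<open>eBe\<close>-module, stated on
  representatives in \<open>R\<close> of elements of \<open>B = R/J\<close>; hence the \<open>s k\<close> have to preserve \<open>J\<close>.\<close>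

locale corner_dual_basis =
  fixes R :: "('p \<Rightarrow> 'k::field) set" and mul :: "('p \<Rightarrow> 'k) \<Rightarrow> ('p \<Rightarrow> 'k) \<Rightarrow> ('p \<Rightarrow> 'k)"
    and e :: "'p \<Rightarrow> 'k" and J :: "('p \<Rightarrow> 'k) set"
    and K :: "'i set" and \<rho> :: "'i \<Rightarrow> 'p \<Rightarrow> 'k" and s :: "'i \<Rightarrow> ('p \<Rightarrow> 'k) \<Rightarrow> ('p \<Rightarrow> 'k)"
  assumes finite_K: "finite K"
    and subspace_left_mod: "fspace.subspace (left_mod R mul e)"
    and subspace_corner: "fspace.subspace (corner R mul e)"
    and subspace_right_mod: "fspace.subspace (right_mod R mul e)"
    and basis_mem: "\<And>k. k \<in> K \<Longrightarrow> \<rho> k \<in> left_mod R mul e"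
    and coord_mem: "\<And>k m. k \<in> K \<Longrightarrow> m \<in> left_mod R mul e \<Longrightarrow> s k m \<in> corner R mul e"
    and coord_linear: "\<And>k. module_hom fscale fscale (s k)"
    and coord_ideal: "\<And>k x. k \<in> K \<Longrightarrow> x \<in> J \<Longrightarrow> s k x \<in> J"
    and dual_basis: "\<And>m. m \<in> left_mod R mul e \<Longrightarrow> (\<Sum>k\<in>K. mul (\<rho> k) (s k m)) = m"
    and basis_mul_coord_mem:
      "\<And>k m. k \<in> K \<Longrightarrow> m \<in> left_mod R mul e \<Longrightarrow> mul (\<rho> k) (s k m) \<in> left_mod R mul e"
    and coord_mul_corner: "\<And>k m c. k \<in> K \<Longrightarrow> m \<in> left_mod R mul e \<Longrightarrow> c \<in> corner R mul e
      \<Longrightarrow> s k (mul m c) = mul (s k m) c"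
    and coord_mul_right_mod: "\<And>k m n. k \<in> K \<Longrightarrow> m \<in> left_mod R mul e \<Longrightarrow> n \<in> right_mod R mul e
      \<Longrightarrow> s k (mul m n) = mul (s k m) n"
    and coord_mul_right_mod_mem: "\<And>k m n. k \<in> K \<Longrightarrow> m \<in> left_mod R mul e \<Longrightarrow> n \<in> right_mod R mul e
      \<Longrightarrow> s k (mul m n) \<in> right_mod R mul e"
begin

abbreviation "L \<equiv> left_mod R mul e"
abbreviation "C \<equiv> corner R mul e"
abbreviation "N \<equiv> right_mod R mul e"

lemma coord_sum_fscale: "s k (\<Sum>t\<in>T. fscale (c t) (f t)) = (\<Sum>t\<in>T. fscale (c t) (s k (f t)))"
  by (simp add: module_hom.sum[OF coord_linear] module_hom.scale[OF coord_linear])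

lemma coord_lin: "s k (lin a x b y) = lin a (s k x) b (s k y)"
  by (simp add: lin_eq_fscale module_hom.add[OF coord_linear] module_hom.scale[OF coord_linear])

lemma delta_pair_basis_expansion:
  assumes m: "m \<in> L" and n: "n \<in> N"
  shows "delta [m, n] - (\<Sum>k\<in>K. delta [\<rho> k, s k (mul m n)])
           \<in> fspace.span (tens_rels [L, N] J \<union> balanced_rels R mul e)"
    (is "_ \<in> ?Y")
proof -
  define x where "x k = mul (\<rho> k) (s k m)" for k
  have "(\<Sum>k\<in>K. fscale 1 (delta ([m, n][0 := x k]))) - delta ([m, n][0 := \<Sum>k\<in>K. fscale 1 (x k)])
      \<in> fspace.span (tens_rels [L, N] J)"
    using m n by (intro tens_rels_sum_in_slot) (auto simp: set_Cons_def subspace_left_mod finite_K x_def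
        basis_mul_coord_mem)
  moreover have "(\<Sum>k\<in>K. fscale 1 (x k)) = m" using dual_basis[OF m] by (simp add: x_def)
  moreover have "fspace.span (tens_rels [L, N] J) \<subseteq> ?Y" by (intro fspace.span_mono) auto
  ultimately have merged: "(\<Sum>k\<in>K. delta [x k, n]) - delta [m, n] \<in> ?Y" by auto
  have "delta [x k, n] - delta [\<rho> k, s k (mul m n)] \<in> balanced_rels R mul e" if k: "k \<in> K" for k
  proof -
    have "(\<lambda>u. delta [mul (\<rho> k) (s k m), n] u - delta [\<rho> k, mul (s k m) n] u) \<in> balanced_rels R mul e"
      unfolding balanced_rels_def using basis_mem[OF k] coord_mem[OF k m] n by blast
    then show ?thesis by (simp add: x_def coord_mul_right_mod[OF k m n] fun_diff_def)
  qed
  then have "(\<Sum>k\<in>K. delta [x k, n] - delta [\<rho> k, s k (mul m n)]) \<in> ?Y"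
    by (intro fspace.span_sum fspace.span_base) auto
  then have "(\<Sum>k\<in>K. delta [x k, n]) - (\<Sum>k\<in>K. delta [\<rho> k, s k (mul m n)]) \<in> ?Y"
    by (simp add: sum_subtractf)
  from fspace.span_diff[OF this merged] show ?thesis by simp
qed

lemma coord_mu_map:
  assumes z: "finsupp z" "{t. z t \<noteq> 0} \<subseteq> listset [L, N]" and k: "k \<in> K"
  shows "s k (mu_map mul z) \<in> N"
    and "(\<Sum>t | z t \<noteq> 0. fscale (z t) (delta [\<rho> k, s k (mul (t ! 0) (t ! 1))]))
           - delta [\<rho> k, s k (mu_map mul z)] \<in> fspace.span (tens_rels [L, N] J)"
proof -
  let ?P = "{t. z t \<noteq> 0}"
  have fin: "finite ?P" using z by (simp add: finsupp_def)
  have prod_mem: "s k (mul (t ! 0) (t ! 1)) \<in> N" if "t \<in> ?P" for t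
    using that z k coord_mul_right_mod_mem by (auto simp: set_Cons_def)
  have "mu_map mul z = (\<Sum>t\<in>?P. fscale (z t) (mul (t ! 0) (t ! 1)))"
    unfolding mu_map_def by (simp add: fscale_def fun_eq_iff sum_fun_apply)
  then have mu: "s k (mu_map mul z) = (\<Sum>t\<in>?P. fscale (z t) (s k (mul (t ! 0) (t ! 1))))"
    by (simp add: coord_sum_fscale)
  show mu_mem: "s k (mu_map mul z) \<in> N"
    unfolding mu using prod_mem
    by (intro fspace.subspace_sum[OF subspace_right_mod] fspace.subspace_scale[OF subspace_right_mod])
  have xs: "[\<rho> k, s k (mu_map mul z)] \<in> listset [L, N]"
    using basis_mem[OF k] mu_mem by (auto simp: set_Cons_def)
  have "(\<Sum>t\<in>?P. fscale (z t) (delta ([\<rho> k, s k (mu_map mul z)][1 := s k (mul (t ! 0) (t ! 1))])))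
      - delta ([\<rho> k, s k (mu_map mul z)][1 := \<Sum>t\<in>?P. fscale (z t) (s k (mul (t ! 0) (t ! 1)))])
      \<in> fspace.span (tens_rels [L, N] J)"
    by (rule tens_rels_sum_in_slot[OF xs]) (use prod_mem fin subspace_right_mod in auto)
  then show "(\<Sum>t | z t \<noteq> 0. fscale (z t) (delta [\<rho> k, s k (mul (t ! 0) (t ! 1))]))
           - delta [\<rho> k, s k (mu_map mul z)] \<in> fspace.span (tens_rels [L, N] J)"
    unfolding mu[symmetric] by simp
qed

lemma mult_map_injective:
  assumes z: "z \<in> lspan (tens_gens (bar_mods R mul e 0))" and mu_J: "mu_map mul z \<in> J"
  shows "z \<in> lspan (tens_rels (bar_mods R mul e 0) J \<union> balanced_rels R mul e)"
proof -
  let ?Y = "fspace.span (tens_rels [L, N] J \<union> balanced_rels R mul e)"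
  let ?P = "{t. z t \<noteq> 0}"
  have bar_mods_0: "bar_mods R mul e 0 = [L, N]" by (simp add: bar_mods_def)
  then have "z \<in> fspace.span (delta ` listset [L, N])" using z by (simp add: lspan_eq_span tens_gens_def)
  then have fz: "finsupp z" and P: "?P \<subseteq> listset [L, N]" by (auto simp: span_delta_image_iff)
  have rels_Y: "fspace.span (tens_rels [L, N] J) \<subseteq> ?Y" by (intro fspace.span_mono) auto
  define F :: "('p \<Rightarrow> 'k) list \<Rightarrow> ('p \<Rightarrow> 'k) list \<Rightarrow> 'k"
    where "F t = (\<Sum>k\<in>K. delta [\<rho> k, s k (mul (t ! 0) (t ! 1))])" for t
  have "(\<Sum>t\<in>?P. fscale (z t) (delta t - F t)) \<in> ?Y"
  proof (intro fspace.span_sum fspace.span_scale)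
    fix t assume "t \<in> ?P"
    then obtain m n where "t = [m, n]" "m \<in> L" "n \<in> N" using P by (auto simp: set_Cons_def)
    then show "delta t - F t \<in> ?Y" unfolding F_def by (simp add: delta_pair_basis_expansion)
  qed
  then have expand: "z - (\<Sum>t\<in>?P. fscale (z t) (F t)) \<in> ?Y"
    by (simp add: finsupp_expansion[OF fz, symmetric] fspace.scale_right_diff_distrib sum_subtractf)
  have "(\<Sum>k\<in>K. (\<Sum>t\<in>?P. fscale (z t) (delta [\<rho> k, s k (mul (t ! 0) (t ! 1))]))
      - delta [\<rho> k, s k (mu_map mul z)]) \<in> ?Y"
    using coord_mu_map(2)[OF fz P] rels_Y by (intro fspace.span_sum) auto
  then have collect: "(\<Sum>t\<in>?P. fscale (z t) (F t)) - (\<Sum>k\<in>K. delta [\<rho> k, s k (mu_map mul z)]) \<in> ?Y"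
    unfolding F_def by (simp add: sum_subtractf fspace.scale_sum_right sum.swap[of _ ?P])
  have "(\<Sum>k\<in>K. delta [\<rho> k, s k (mu_map mul z)]) \<in> ?Y"
  proof (intro fspace.span_sum fspace.span_base UnI1)
    fix k assume k: "k \<in> K"
    show "delta [\<rho> k, s k (mu_map mul z)] \<in> tens_rels [L, N] J"
      using basis_mem[OF k] coord_mu_map(1)[OF fz P k] coord_ideal[OF k mu_J]
      by (intro tens_rels_idealI[where i = 1]) (auto simp: set_Cons_def)
  qed
  with expand collect have "(z - (\<Sum>t\<in>?P. fscale (z t) (F t)))
      + ((\<Sum>t\<in>?P. fscale (z t) (F t)) - (\<Sum>k\<in>K. delta [\<rho> k, s k (mu_map mul z)]))
      + (\<Sum>k\<in>K. delta [\<rho> k, s k (mu_map mul z)]) \<in> ?Y"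
    by (intro fspace.span_add)
  then show ?thesis by (simp add: lspan_eq_span bar_mods_0)
qed

abbreviation bar_tail :: "nat \<Rightarrow> ('p \<Rightarrow> 'k) set list" where
  "bar_tail n \<equiv> replicate n C @ [N]"

lemma bar_mods_eq: "bar_mods R mul e n = L # bar_tail n"
  by (simp add: bar_mods_def)

definition homotopy :: "('p \<Rightarrow> 'k) list \<Rightarrow> ('p \<Rightarrow> 'k) list \<Rightarrow> 'k" where
  "homotopy t = (\<Sum>k\<in>K. delta (\<rho> k # s k (hd t) # tl t))"

lemma homotopy_Cons: "homotopy (x # l) = (\<Sum>k\<in>K. delta (\<rho> k # s k x # l))"
  by (simp add: homotopy_def)

lemma finsupp_homotopy: "finsupp (homotopy t)"
  unfolding homotopy_def by (intro finsupp_sum finsupp_delta)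

lemma homotopy_mem_span:
  assumes "t \<in> listset (L # bar_tail n)"
  shows "homotopy t \<in> fspace.span (delta ` listset (L # bar_tail (Suc n)))"
proof -
  obtain m r where t: "t = m # r" and m: "m \<in> L" and r: "r \<in> listset (bar_tail n)"
    using assms by (auto simp: set_Cons_def)
  show ?thesis unfolding t homotopy_Cons
    by (intro fspace.span_sum fspace.span_base imageI) (auto simp: set_Cons_def basis_mem coord_mem m r)
qed

lemma bar_d_homotopy:
  assumes t: "t \<in> listset (L # bar_tail (Suc n))"
  shows "bar_d mul (homotopy t) + lin_ext homotopy (bar_d mul (delta t)) - delta t
           \<in> fspace.span (tens_rels (L # bar_tail (Suc n)) J)"
proof -
  obtain m c r where tt: "t = m # c # r" and m: "m \<in> L" and c: "c \<in> C"
    using t by (auto simp: set_Cons_def)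
  have d_h: "bar_d mul (homotopy t) = (\<Sum>k\<in>K. bar_d mul (delta (\<rho> k # s k m # c # r)))"
    unfolding tt homotopy_Cons by (simp add: bar_d_sum finsupp_delta)
  have h_d: "lin_ext homotopy (bar_d mul (delta t)) = homotopy (mul m c # r)
      - (\<Sum>i<length r. fscale ((-1) ^ i) (homotopy (m # merge_at mul i (c # r))))"
  proof -
    let ?S = "\<Sum>i<length r. fscale ((-1) ^ i) (delta (m # merge_at mul i (c # r)))"
    have S: "finsupp ?S" by (intro finsupp_sum finsupp_fscale finsupp_delta)
    have "lin_ext homotopy (delta (mul m c # r) - ?S) = homotopy (mul m c # r) - lin_ext homotopy ?S"
      by (simp only: lin_ext_diff[OF finsupp_delta S] lin_ext_delta)
    also have "lin_ext homotopy ?S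
        = (\<Sum>i<length r. fscale ((-1) ^ i) (homotopy (m # merge_at mul i (c # r))))"
      by (simp add: lin_ext_sum finsupp_fscale finsupp_delta lin_ext_fscale lin_ext_delta)
    finally show ?thesis unfolding tt bar_d_delta_Cons2 .
  qed
  have d_basis: "bar_d mul (delta (\<rho> k # s k m # c # r)) = delta (mul (\<rho> k) (s k m) # c # r)
      - delta (\<rho> k # mul (s k m) c # r)
      + (\<Sum>i<length r. fscale ((-1) ^ i) (delta (\<rho> k # s k m # merge_at mul i (c # r))))" for k
    unfolding bar_d_delta_Cons2
    by (simp only: length_Cons sum.lessThan_Suc_shift) (simp add: merge_at_Suc merge_at_0 sum_negf)
  have h_merged: "homotopy (mul m c # r) = (\<Sum>k\<in>K. delta (\<rho> k # mul (s k m) c # r))"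
    unfolding homotopy_Cons by (rule sum.cong[OF refl]) (simp add: coord_mul_corner[OF _ m c])
  \<comment> \<open>all terms cancel except the one where \<open>\<rho> k\<close> is multiplied back onto \<open>s k m\<close>\<close>
  have sum_eq: "bar_d mul (homotopy t) + lin_ext homotopy (bar_d mul (delta t))
      = (\<Sum>k\<in>K. delta (mul (\<rho> k) (s k m) # c # r))"
    unfolding d_h h_d d_basis h_merged unfolding homotopy_Cons
    by (simp add: fun_eq_iff sum_fun_apply fscale_def sum.distrib sum_subtractf sum_distrib_left sum_negf
        sum.swap[of _ K "{..<length r}"])
  have "(\<Sum>k\<in>K. fscale 1 (delta (t[0 := mul (\<rho> k) (s k m)])))
      - delta (t[0 := \<Sum>k\<in>K. fscale 1 (mul (\<rho> k) (s k m))])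
      \<in> fspace.span (tens_rels (L # bar_tail (Suc n)) J)"
    using t m by (intro tens_rels_sum_in_slot) (auto simp: subspace_left_mod finite_K basis_mul_coord_mem)
  then show ?thesis unfolding sum_eq using dual_basis[OF m] by (simp add: tt)
qed

lemma homotopy_lin_rel:
  assumes xs: "xs \<in> listset (L # bar_tail n)" and i: "i < length (L # bar_tail n)"
    and y: "y \<in> (L # bar_tail n) ! i" and y': "y' \<in> (L # bar_tail n) ! i"
  shows "lin_ext homotopy
      (\<lambda>u. delta (xs[i := lin a y b y']) u - a * delta (xs[i := y]) u - b * delta (xs[i := y']) u)
    \<in> fspace.span (tens_rels (L # bar_tail (Suc n)) J)"
proof -
  let ?Ss = "L # bar_tail (Suc n)"
  obtain x xs' where xs_eq: "xs = x # xs'" and x: "x \<in> L" and xs': "xs' \<in> listset (bar_tail n)"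
    using xs by (auto simp: set_Cons_def)
  define ys where "ys k = \<rho> k # s k x # xs'" for k
  have ys: "ys k \<in> listset ?Ss" if k: "k \<in> K" for k
    using basis_mem[OF k] coord_mem[OF k x] xs' by (simp add: ys_def set_Cons_def)
  let ?r = "\<lambda>l j v w. (\<lambda>u. delta (l[j := lin a v b w]) u - a * delta (l[j := v]) u - b * delta (l[j := w]) u)"
  have "?r xs i y y' = delta (xs[i := lin a y b y']) - fscale a (delta (xs[i := y])) - fscale b (delta (xs[i := y']))"
    by (simp add: fun_eq_iff fscale_def)
  then have h_rel: "lin_ext homotopy (?r xs i y y')
      = homotopy (xs[i := lin a y b y']) - fscale a (homotopy (xs[i := y])) - fscale b (homotopy (xs[i := y']))"
    by (simp add: lin_ext_diff finsupp_diff finsupp_fscale finsupp_delta lin_ext_fscale lin_ext_delta)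
  show ?thesis
  proof (cases i)
    case 0
    \<comment> \<open>a relation in the first slot becomes one in the second slot, by linearity of \<open>s k\<close>\<close>
    have "lin_ext homotopy (?r xs i y y') = (\<Sum>k\<in>K. ?r (ys k) 1 (s k y) (s k y'))"
      unfolding h_rel unfolding 0 xs_eq
      by (simp add: homotopy_Cons ys_def coord_lin fun_eq_iff sum_fun_apply fscale_def sum_subtractf
          sum_distrib_left)
    also have "\<dots> \<in> fspace.span (tens_rels ?Ss J)"
      using y y' 0 coord_mem by (intro fspace.span_sum fspace.span_base tens_rels_linI ys) auto
    finally show ?thesis .
  next
    case (Suc j)
    have "lin_ext homotopy (?r xs i y y') = (\<Sum>k\<in>K. ?r (ys k) (Suc i) y y')"
      unfolding h_rel unfolding Suc xs_eq
      by (simp add: homotopy_Cons ys_def fun_eq_iff sum_fun_apply fscale_def sum_subtractf sum_distrib_left)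
    also have "\<dots> \<in> fspace.span (tens_rels ?Ss J)"
      using y y' i Suc by (intro fspace.span_sum fspace.span_base tens_rels_linI ys) auto
    finally show ?thesis .
  qed
qed

lemma homotopy_ideal_rel:
  assumes xs: "xs \<in> listset (L # bar_tail n)" and i: "i < length xs" and xs_i: "xs ! i \<in> J"
  shows "lin_ext homotopy (delta xs) \<in> fspace.span (tens_rels (L # bar_tail (Suc n)) J)"
proof -
  obtain x xs' where xs_eq: "xs = x # xs'" and x: "x \<in> L" and xs': "xs' \<in> listset (bar_tail n)"
    using xs by (auto simp: set_Cons_def)
  have "delta (\<rho> k # s k x # xs') \<in> tens_rels (L # bar_tail (Suc n)) J" if k: "k \<in> K" for k
  proof (rule tens_rels_idealI[where i = "Suc i"])
    show "\<rho> k # s k x # xs' \<in> listset (L # bar_tail (Suc n))"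
      using basis_mem[OF k] coord_mem[OF k x] xs' by (simp add: set_Cons_def)
    show "Suc i < length (\<rho> k # s k x # xs')" using i xs_eq by simp
    show "(\<rho> k # s k x # xs') ! Suc i \<in> J"
      using xs_i coord_ideal[OF k] xs_eq by (cases i) auto
  qed
  then show ?thesis
    unfolding lin_ext_delta xs_eq homotopy_Cons by (intro fspace.span_sum fspace.span_base)
qed

lemma homotopy_tens_rels:
  assumes "x \<in> tens_rels (L # bar_tail n) J"
  shows "lin_ext homotopy x \<in> fspace.span (tens_rels (L # bar_tail (Suc n)) J)"
  using assms unfolding tens_rels_def[of "L # bar_tail n"]
  by (blast intro: homotopy_lin_rel homotopy_ideal_rel)

lemma homotopy_identity:
  assumes z: "z \<in> fspace.span (delta ` listset (L # bar_tail (Suc n)))"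
  shows "z - bar_d mul (lin_ext homotopy z) - lin_ext homotopy (bar_d mul z)
           \<in> fspace.span (tens_rels (L # bar_tail (Suc n)) J)"
proof -
  let ?P = "{t. z t \<noteq> 0}"
  have fz: "finsupp z" and P: "?P \<subseteq> listset (L # bar_tail (Suc n))"
    using z by (auto simp: span_delta_image_iff)
  have lin_ext_expansion: "lin_ext \<phi> z = (\<Sum>t\<in>?P. fscale (z t) (\<phi> t))" for \<phi>
    by (simp add: lin_ext_def fscale_def fun_eq_iff sum_fun_apply)
  have d_h: "bar_d mul (lin_ext homotopy z) = (\<Sum>t\<in>?P. fscale (z t) (bar_d mul (homotopy t)))"
    unfolding lin_ext_expansion by (simp add: bar_d_sum bar_d_fscale finsupp_fscale finsupp_homotopy)
  have h_d: "lin_ext homotopy (bar_d mul z) = (\<Sum>t\<in>?P. fscale (z t) (lin_ext homotopy (bar_d mul (delta t))))"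
    using lin_ext_expansion[of "\<lambda>t. bar_d mul (delta t)"]
    by (simp add: bar_d_eq_lin_ext[symmetric] lin_ext_sum lin_ext_fscale finsupp_fscale finsupp_bar_d_delta)
  have eq: "(\<Sum>t\<in>?P. fscale (z t)
      (bar_d mul (homotopy t) + lin_ext homotopy (bar_d mul (delta t)) - delta t))
    = bar_d mul (lin_ext homotopy z) + lin_ext homotopy (bar_d mul z) - z"
    unfolding d_h h_d
    by (simp add: fspace.scale_right_diff_distrib fspace.scale_right_distrib sum_subtractf sum.distrib
        finsupp_expansion[OF fz, symmetric])
  have "(\<Sum>t\<in>?P. fscale (z t)
      (bar_d mul (homotopy t) + lin_ext homotopy (bar_d mul (delta t)) - delta t))
    \<in> fspace.span (tens_rels (L # bar_tail (Suc n)) J)"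
    using P bar_d_homotopy by (intro fspace.span_sum fspace.span_scale) auto
  from fspace.span_neg[OF this[unfolded eq]] show ?thesis by (simp add: algebra_simps)
qed

lemma bar_complex_exact:
  assumes n: "n \<ge> 1" and z: "z \<in> lspan (tens_gens (bar_mods R mul e n))"
    and d_z: "bar_d mul z \<in> lspan (tens_rels (bar_mods R mul e (n - 1)) J)"
  shows "z \<in> lspan (bar_d mul ` tens_gens (bar_mods R mul e (Suc n)) \<union> tens_rels (bar_mods R mul e n) J)"
proof -
  obtain n' where n': "n = Suc n'" using n by (cases n) auto
  let ?gens = "delta ` listset (L # bar_tail (Suc (Suc n')))"
  let ?Y = "fspace.span (bar_d mul ` ?gens \<union> tens_rels (L # bar_tail (Suc n')) J)"
  have rels_Y: "fspace.span (tens_rels (L # bar_tail (Suc n')) J) \<subseteq> ?Y"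
    by (intro fspace.span_mono) auto
  have z': "z \<in> fspace.span (delta ` listset (L # bar_tail (Suc n')))"
    using z by (simp add: lspan_eq_span tens_gens_def bar_mods_eq n')
  have "lin_ext homotopy z \<in> fspace.span ?gens"
  proof (rule lin_ext_span[OF z'])
    fix x :: "('p \<Rightarrow> 'k) list \<Rightarrow> 'k"
    assume "x \<in> delta ` listset (L # bar_tail (Suc n'))"
    then obtain t where "x = delta t" "t \<in> listset (L # bar_tail (Suc n'))" by blast
    then show "finsupp x \<and> lin_ext homotopy x \<in> fspace.span ?gens"
      using homotopy_mem_span[of t "Suc n'"] by (simp add: finsupp_delta lin_ext_delta)
  qed
  then have "bar_d mul (lin_ext homotopy z) \<in> fspace.span (bar_d mul ` ?gens)"
    by (rule bar_d_span) (auto simp: finsupp_delta)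
  then have d_h: "bar_d mul (lin_ext homotopy z) \<in> ?Y"
    using fspace.span_mono[of "bar_d mul ` ?gens"] by blast
  have "bar_d mul z \<in> fspace.span (tens_rels (L # bar_tail n') J)"
    using d_z by (simp add: lspan_eq_span bar_mods_eq n')
  then have "lin_ext homotopy (bar_d mul z) \<in> fspace.span (tens_rels (L # bar_tail (Suc n')) J)"
    by (rule lin_ext_span) (use finsupp_tens_rels homotopy_tens_rels in blast)
  then have h_d: "lin_ext homotopy (bar_d mul z) \<in> ?Y" using rels_Y by blast
  have "z - bar_d mul (lin_ext homotopy z) - lin_ext homotopy (bar_d mul z) \<in> ?Y"
    using homotopy_identity[OF z'] rels_Y by blast
  with d_h h_d have "(z - bar_d mul (lin_ext homotopy z) - lin_ext homotopy (bar_d mul z))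
      + bar_d mul (lin_ext homotopy z) + lin_ext homotopy (bar_d mul z) \<in> ?Y"
    by (intro fspace.span_add)
  then show ?thesis by (simp add: lspan_eq_span tens_gens_def bar_mods_eq n')
qed

end

section \<open>Path algebras\<close>

lemma sum_atMost_add:
  fixes p n :: nat
  shows "(\<Sum>i\<le>p + n. F i) = (\<Sum>i<p. F i) + (\<Sum>j\<le>n. F (p + j))"
  by (induct n) (simp_all add: lessThan_Suc_atMost[symmetric] add.assoc)

definition wf_quiver :: "('v, 'a) quiver \<Rightarrow> bool" where
  "wf_quiver Q \<longleftrightarrow> (\<forall>\<alpha>\<in>arrs Q. src Q \<alpha> \<in> verts Q \<and> tgt Q \<alpha> \<in> verts Q)"

lemma valid_path_Nil: "valid_path Q (v, []) \<longleftrightarrow> v \<in> verts Q"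
  by (simp add: valid_path_def)

lemma valid_path_Cons:
  assumes "wf_quiver Q"
  shows "valid_path Q (v, a # xs) \<longleftrightarrow>
    v \<in> verts Q \<and> a \<in> arrs Q \<and> src Q a = v \<and> valid_path Q (tgt Q a, xs)"
proof
  assume h: "valid_path Q (v, a # xs)"
  then have a: "a \<in> arrs Q" by (simp add: valid_path_def)
  have "xs \<noteq> [] \<longrightarrow> src Q (hd xs) = tgt Q a"
    using h unfolding valid_path_def by (cases xs) (auto dest: spec[of _ 0])
  moreover have "\<forall>i. Suc i < length xs \<longrightarrow> tgt Q (xs ! i) = src Q (xs ! Suc i)"
    using h unfolding valid_path_def by (auto dest: spec[of _ "Suc _"])
  ultimately show "v \<in> verts Q \<and> a \<in> arrs Q \<and> src Q a = v \<and> valid_path Q (tgt Q a, xs)"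
    using h a assms by (auto simp: valid_path_def wf_quiver_def)
next
  assume h: "v \<in> verts Q \<and> a \<in> arrs Q \<and> src Q a = v \<and> valid_path Q (tgt Q a, xs)"
  have "tgt Q ((a # xs) ! i) = src Q ((a # xs) ! Suc i)" if "Suc i < length (a # xs)" for i
    using h that by (cases i; cases xs) (auto simp: valid_path_def)
  then show "valid_path Q (v, a # xs)" using h by (auto simp: valid_path_def)
qed

lemma path_end_Nil: "path_end Q (v, []) = v"
  by (simp add: path_end_def)

lemma path_end_Cons: "path_end Q (v, a # xs) = path_end Q (tgt Q a, xs)"
  by (cases xs) (auto simp: path_end_def)

lemma path_end_append: "path_end Q (v, xs @ ys) = path_end Q (path_end Q (v, xs), ys)"
  by (cases ys) (auto simp: path_end_def)

lemma valid_path_append: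
  assumes "wf_quiver Q"
  shows "valid_path Q (v, xs @ ys) \<longleftrightarrow> valid_path Q (v, xs) \<and> valid_path Q (path_end Q (v, xs), ys)"
proof (induct xs arbitrary: v)
  case Nil
  show ?case by (auto simp: valid_path_Nil path_end_Nil valid_path_def)
next
  case (Cons a xs)
  then show ?case by (simp add: valid_path_Cons[OF assms] path_end_Cons)
qed

lemma pmul_nonzero:
  assumes "pmul Q f g (v, zs) \<noteq> 0"
  obtains i where "i \<le> length zs" "f (v, take i zs) \<noteq> 0" "g (path_end Q (v, take i zs), drop i zs) \<noteq> 0"
proof -
  obtain i where "i \<in> {..length zs}"
    "f (v, take i zs) * g (path_end Q (v, take i zs), drop i zs) \<noteq> 0"
    using assms unfolding pmul_def by (metis (no_types, lifting) case_prod_conv sum.neutral)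
  then show ?thesis using that by auto
qed

lemma path_alg_pmul:
  assumes wf: "wf_quiver Q" and f: "f \<in> path_alg Q" and g: "g \<in> path_alg Q"
  shows "pmul Q f g \<in> path_alg Q"
proof -
  let ?Sf = "{p. f p \<noteq> 0}" and ?Sg = "{p. g p \<noteq> 0}"
  have sub: "{p. pmul Q f g p \<noteq> 0} \<subseteq> (\<lambda>(p, q). (fst p, snd p @ snd q)) ` (?Sf \<times> ?Sg)"
  proof
    fix p assume "p \<in> {p. pmul Q f g p \<noteq> 0}"
    then obtain v zs where p: "p = (v, zs)" and nz: "pmul Q f g (v, zs) \<noteq> 0" by (cases p) auto
    obtain i where "f (v, take i zs) \<noteq> 0" "g (path_end Q (v, take i zs), drop i zs) \<noteq> 0"
      using pmul_nonzero[OF nz] by metis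
    then show "p \<in> (\<lambda>(p, q). (fst p, snd p @ snd q)) ` (?Sf \<times> ?Sg)"
      unfolding p by (intro image_eqI[where x = "((v, take i zs), (path_end Q (v, take i zs), drop i zs))"]) auto
  qed
  have fin: "finite {p. pmul Q f g p \<noteq> 0}"
    using f g by (intro finite_subset[OF sub] finite_imageI finite_cartesian_product) (auto simp: path_alg_def)
  have "valid_path Q (v, zs)" if nz: "pmul Q f g (v, zs) \<noteq> 0" for v zs
  proof -
    obtain i where "f (v, take i zs) \<noteq> 0" "g (path_end Q (v, take i zs), drop i zs) \<noteq> 0"
      using pmul_nonzero[OF nz] by metis
    then have "valid_path Q (v, take i zs)" "valid_path Q (path_end Q (v, take i zs), drop i zs)"
      using f g by (auto simp: path_alg_def)
    then show ?thesis using valid_path_append[OF wf, of v "take i zs" "drop i zs"] by simp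
  qed
  with fin show ?thesis by (auto simp: path_alg_def)
qed

lemma subspace_path_alg_restrict:
  fixes Q :: "('v, 'a) quiver" and P :: "'v \<times> 'a list \<Rightarrow> bool"
  shows "fspace.subspace {f :: _ \<Rightarrow> 'k::field. f \<in> path_alg Q \<and> (\<forall>p. f p \<noteq> 0 \<longrightarrow> P p)}"
proof (rule fspace.subspaceI)
  fix f g :: "'v \<times> 'a list \<Rightarrow> 'k"
  assume "f \<in> {f. f \<in> path_alg Q \<and> (\<forall>p. f p \<noteq> 0 \<longrightarrow> P p)}"
    and "g \<in> {f. f \<in> path_alg Q \<and> (\<forall>p. f p \<noteq> 0 \<longrightarrow> P p)}"
  then show "f + g \<in> {f. f \<in> path_alg Q \<and> (\<forall>p. f p \<noteq> 0 \<longrightarrow> P p)}"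
    unfolding path_alg_def
    by (auto intro: finite_subset[of _ "{p. f p \<noteq> 0} \<union> {p. g p \<noteq> 0}"]) (metis add.right_neutral)+
qed (auto simp: path_alg_def fscale_def elim: finite_subset[rotated])

lemma path_alg_restrict: "f \<in> path_alg Q \<Longrightarrow> (\<lambda>p. if P p then f p else 0) \<in> path_alg Q"
  unfolding path_alg_def by (auto elim: finite_subset[rotated])

definition vertex_idem :: "'v set \<Rightarrow> ('v \<times> 'a list \<Rightarrow> 'k::field)" where
  "vertex_idem V = (\<lambda>p. if snd p = [] \<and> fst p \<in> V then 1 else 0)"

lemma pmul_vertex_idem_right: "pmul Q f (vertex_idem V) = (\<lambda>p. if path_end Q p \<in> V then f p else 0)"
proof (rule ext, clarify)
  fix v zs
  have "pmul Q f (vertex_idem V) (v, zs)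
      = (\<Sum>i\<le>length zs. if i = length zs then (if path_end Q (v, zs) \<in> V then f (v, zs) else 0) else 0)"
    unfolding pmul_def vertex_idem_def prod.case by (intro sum.cong refl) auto
  then show "pmul Q f (vertex_idem V) (v, zs) = (if path_end Q (v, zs) \<in> V then f (v, zs) else 0)"
    by simp
qed

lemma pmul_vertex_idem_left: "pmul Q (vertex_idem V) f = (\<lambda>p. if fst p \<in> V then f p else 0)"
proof (rule ext, clarify)
  fix v zs
  have "pmul Q (vertex_idem V) f (v, zs)
      = (\<Sum>i\<le>length zs. if i = 0 then (if v \<in> V then f (v, zs) else 0) else 0)"
    unfolding pmul_def vertex_idem_def prod.case by (intro sum.cong refl) (auto simp: path_end_Nil)
  then show "pmul Q (vertex_idem V) f (v, zs) = (if fst (v, zs) \<in> V then f (v, zs) else 0)"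
    by simp
qed

lemma pmul_vertex_idem_middle:
  assumes f: "\<And>p. f p \<noteq> 0 \<Longrightarrow> path_end Q p \<in> V"
  shows "pmul Q f (pmul Q (vertex_idem V) g) = pmul Q f g"
proof (rule ext, clarify)
  fix v zs
  show "pmul Q f (pmul Q (vertex_idem V) g) (v, zs) = pmul Q f g (v, zs)"
    unfolding pmul_def[of _ f] prod.case
  proof (intro sum.cong refl)
    fix i
    show "f (v, take i zs) * pmul Q (vertex_idem V) g (path_end Q (v, take i zs), drop i zs) =
          f (v, take i zs) * g (path_end Q (v, take i zs), drop i zs)"
      using f[of "(v, take i zs)"] by (cases "f (v, take i zs) = 0") (auto simp: pmul_vertex_idem_left)
  qed
qed

lemma left_mod_vertex_idem:
  "left_mod (path_alg Q) (pmul Q) (vertex_idem V) = {f \<in> path_alg Q. \<forall>p. f p \<noteq> 0 \<longrightarrow> path_end Q p \<in> V}"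
proof (intro equalityI subsetI)
  fix f assume "f \<in> {f \<in> path_alg Q. \<forall>p. f p \<noteq> 0 \<longrightarrow> path_end Q p \<in> V}"
  moreover from this have "f = pmul Q f (vertex_idem V)"
    unfolding pmul_vertex_idem_right by (auto simp: fun_eq_iff)
  ultimately show "f \<in> left_mod (path_alg Q) (pmul Q) (vertex_idem V)" unfolding left_mod_def by auto
qed (auto simp: left_mod_def pmul_vertex_idem_right intro: path_alg_restrict split: if_splits)

lemma corner_vertex_idem:
  "corner (path_alg Q) (pmul Q) (vertex_idem V)
     = {f \<in> path_alg Q. \<forall>p. f p \<noteq> 0 \<longrightarrow> fst p \<in> V \<and> path_end Q p \<in> V}"
proof (intro equalityI subsetI)
  fix f assume "f \<in> {f \<in> path_alg Q. \<forall>p. f p \<noteq> 0 \<longrightarrow> fst p \<in> V \<and> path_end Q p \<in> V}"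
  moreover from this have "f = pmul Q (pmul Q (vertex_idem V) f) (vertex_idem V)"
    unfolding pmul_vertex_idem_right pmul_vertex_idem_left by (auto simp: fun_eq_iff)
  ultimately show "f \<in> corner (path_alg Q) (pmul Q) (vertex_idem V)" unfolding corner_def by auto
qed (auto simp: corner_def pmul_vertex_idem_right pmul_vertex_idem_left intro!: path_alg_restrict
    split: if_splits)

lemma right_mod_vertex_idem:
  "right_mod (path_alg Q) (pmul Q) (vertex_idem V) = {f \<in> path_alg Q. \<forall>p. f p \<noteq> 0 \<longrightarrow> fst p \<in> V}"
proof (intro equalityI subsetI)
  fix f assume "f \<in> {f \<in> path_alg Q. \<forall>p. f p \<noteq> 0 \<longrightarrow> fst p \<in> V}"
  moreover from this have "f = pmul Q (vertex_idem V) f"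
    unfolding pmul_vertex_idem_left by (auto simp: fun_eq_iff)
  ultimately show "f \<in> right_mod (path_alg Q) (pmul Q) (vertex_idem V)" unfolding right_mod_def by auto
qed (auto simp: right_mod_def pmul_vertex_idem_left intro: path_alg_restrict split: if_splits)

section \<open>The stretched quiver\<close>

lemma stretch_quiver_simps:
  "verts (stretch_quiver A Q) = Inl ` verts Q \<union> {Inr (\<alpha>, j) | \<alpha> j. \<alpha> \<in> arrs Q \<and> 1 \<le> j \<and> j \<le> A - 1}"
  "arrs (stretch_quiver A Q) = {(\<alpha>, j) | \<alpha> j. \<alpha> \<in> arrs Q \<and> 1 \<le> j \<and> j \<le> A}"
  "src (stretch_quiver A Q) (\<alpha>, j) = (if j = 1 then Inl (src Q \<alpha>) else Inr (\<alpha>, j - 1))"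
  "tgt (stretch_quiver A Q) (\<alpha>, j) = (if j = A then Inl (tgt Q \<alpha>) else Inr (\<alpha>, j))"
  by (simp_all add: stretch_quiver_def)

lemma wf_quiver_stretch: "finite_quiver Q \<Longrightarrow> wf_quiver (stretch_quiver A Q)"
  unfolding wf_quiver_def finite_quiver_def by (auto simp: stretch_quiver_simps)

lemma finite_verts_stretch: "finite_quiver Q \<Longrightarrow> finite (verts (stretch_quiver A Q))"
proof -
  assume "finite_quiver Q"
  then have "finite (Inl ` verts Q \<union> Inr ` (arrs Q \<times> {..A}))"
    by (auto simp: finite_quiver_def)
  moreover have "verts (stretch_quiver A Q) \<subseteq> Inl ` verts Q \<union> Inr ` (arrs Q \<times> {..A})"
    by (auto simp: stretch_quiver_simps)
  ultimately show ?thesis by (rule finite_subset[rotated])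
qed

lemma theta_nonzero_start:
  assumes "g \<in> path_alg Q" and "theta A g (v, zs) \<noteq> 0"
  shows "v \<in> Inl ` verts Q"
proof -
  from assms(2) have "{p. g p \<noteq> 0 \<and> stretch_path A p = (v, zs)} \<noteq> {}"
    unfolding theta_def by (metis (no_types, lifting) sum.empty)
  then obtain u xs where "g (u, xs) \<noteq> 0" "stretch_path A (u, xs) = (v, zs)" by auto
  moreover from this have "valid_path Q (u, xs)" using assms(1) by (auto simp: path_alg_def)
  ultimately show ?thesis by (auto simp: stretch_path_def valid_path_def)
qed

text \<open>For the vertex \<open>w\<^sub>j = Inr (\<alpha>, j)\<close> on the arrow \<open>\<alpha>\<close>, the path \<open>\<alpha>\<^sub>j\<^sub>+\<^sub>1 \<cdots> \<alpha>\<^sub>A\<close> is the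
  only way to reach an original vertex, namely \<open>tgt Q \<alpha>\<close>; original vertices are reached by the
  trivial path.  Left multiplication by \<open>tail_path\<close> and the map \<open>tail_coord\<close> stripping it off
  form the dual basis of \<open>Be\<close>.\<close>

definition tail_path :: "nat \<Rightarrow> 'v + 'a \<times> nat \<Rightarrow> ('a \<times> nat) list" where
  "tail_path A k = (case k of Inl u \<Rightarrow> [] | Inr (\<alpha>, j) \<Rightarrow> map (\<lambda>i. (\<alpha>, i)) [Suc j..<Suc A])"

definition tail_end :: "('v, 'a) quiver \<Rightarrow> 'v + 'a \<times> nat \<Rightarrow> 'v + 'a \<times> nat" where
  "tail_end Q k = (case k of Inl u \<Rightarrow> Inl u | Inr (\<alpha>, j) \<Rightarrow> Inl (tgt Q \<alpha>))"

lemma arrow_chain: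
  assumes fq: "finite_quiver Q" and \<alpha>: "\<alpha> \<in> arrs Q"
  shows "1 \<le> j \<Longrightarrow> j < A \<Longrightarrow>
    valid_path (stretch_quiver A Q) (Inr (\<alpha>, j), map (\<lambda>i. (\<alpha>, i)) [Suc j..<Suc A]) \<and>
    path_end (stretch_quiver A Q) (Inr (\<alpha>, j), map (\<lambda>i. (\<alpha>, i)) [Suc j..<Suc A]) = Inl (tgt Q \<alpha>) \<and>
    (\<forall>i < A - j. path_end (stretch_quiver A Q) (Inr (\<alpha>, j), take i (map (\<lambda>i. (\<alpha>, i)) [Suc j..<Suc A]))
       \<notin> Inl ` verts Q)"
proof (induct "A - j" arbitrary: j)
  case (Suc d j)
  let ?Q' = "stretch_quiver A Q"
  have wf: "wf_quiver ?Q'" by (rule wf_quiver_stretch[OF fq])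
  have tv: "tgt Q \<alpha> \<in> verts Q" using fq \<alpha> by (auto simp: finite_quiver_def)
  have up: "[Suc j..<Suc A] = Suc j # [Suc (Suc j)..<Suc A]" using Suc by (simp add: upt_conv_Cons)
  have first: "Inr (\<alpha>, j) \<in> verts ?Q'" "(\<alpha>, Suc j) \<in> arrs ?Q'" "src ?Q' (\<alpha>, Suc j) = Inr (\<alpha>, j)"
    using Suc \<alpha> by (auto simp: stretch_quiver_simps)
  show ?case
  proof (cases "Suc j = A")
    case True
    then show ?thesis unfolding up using first tv
      by (auto simp: valid_path_Cons[OF wf] valid_path_Nil path_end_Cons path_end_Nil stretch_quiver_simps)
  next
    case False
    have ta: "tgt ?Q' (\<alpha>, Suc j) = Inr (\<alpha>, Suc j)" using False by (simp add: stretch_quiver_simps)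
    have IH: "valid_path ?Q' (Inr (\<alpha>, Suc j), map (\<lambda>i. (\<alpha>, i)) [Suc (Suc j)..<Suc A]) \<and>
      path_end ?Q' (Inr (\<alpha>, Suc j), map (\<lambda>i. (\<alpha>, i)) [Suc (Suc j)..<Suc A]) = Inl (tgt Q \<alpha>) \<and>
      (\<forall>i < A - Suc j. path_end ?Q' (Inr (\<alpha>, Suc j), take i (map (\<lambda>i. (\<alpha>, i)) [Suc (Suc j)..<Suc A]))
         \<notin> Inl ` verts Q)"
      using Suc False by (intro Suc(1)) auto
    have "path_end ?Q' (Inr (\<alpha>, j), take i (map (\<lambda>i. (\<alpha>, i)) [Suc j..<Suc A])) \<notin> Inl ` verts Q"
      if "i < A - j" for i
      using IH that unfolding up by (cases i) (auto simp: path_end_Nil path_end_Cons ta)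
    then show ?thesis unfolding up using IH first ta by (simp add: valid_path_Cons[OF wf] path_end_Cons)
  qed
qed simp

lemma arrow_chain_prefix:
  assumes fq: "finite_quiver Q"
  shows "1 \<le> j \<Longrightarrow> j < A \<Longrightarrow> valid_path (stretch_quiver A Q) (Inr (\<alpha>, j), zs) \<Longrightarrow>
    path_end (stretch_quiver A Q) (Inr (\<alpha>, j), zs) \<in> Inl ` verts Q \<Longrightarrow>
    \<exists>zs'. zs = map (\<lambda>i. (\<alpha>, i)) [Suc j..<Suc A] @ zs'"
proof (induct "A - j" arbitrary: j zs)
  case (Suc d j zs)
  let ?Q' = "stretch_quiver A Q"
  have wf: "wf_quiver ?Q'" by (rule wf_quiver_stretch[OF fq])
  have up: "[Suc j..<Suc A] = Suc j # [Suc (Suc j)..<Suc A]" using Suc by (simp add: upt_conv_Cons)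
  show ?case
  proof (cases zs)
    case Nil
    then show ?thesis using Suc by (auto simp: path_end_Nil)
  next
    case (Cons b zs'')
    obtain \<beta> i where b: "b = (\<beta>, i)" by (cases b)
    have vb: "b \<in> arrs ?Q'" "src ?Q' b = Inr (\<alpha>, j)" "valid_path ?Q' (tgt ?Q' b, zs'')"
      using Suc.prems(3) unfolding Cons valid_path_Cons[OF wf] by auto
    then have bi: "\<beta> = \<alpha>" "i = Suc j" using Suc.prems(1) unfolding b
      by (auto simp: stretch_quiver_simps split: if_splits)
    have "path_end ?Q' (tgt ?Q' b, zs'') \<in> Inl ` verts Q"
      using Suc.prems(4) unfolding Cons path_end_Cons .
    moreover have "tgt ?Q' b = Inr (\<alpha>, Suc j)" if "Suc j \<noteq> A"
      using that unfolding b bi by (simp add: stretch_quiver_simps)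
    ultimately have "\<exists>zs'. zs'' = map (\<lambda>i. (\<alpha>, i)) [Suc (Suc j)..<Suc A] @ zs'" if "Suc j \<noteq> A"
      using Suc that vb(3) by (intro Suc(1)) auto
    then show ?thesis unfolding Cons b bi up by (cases "Suc j = A") auto
  qed
qed simp

definition tail_coord :: "('v, 'a) quiver \<Rightarrow> nat \<Rightarrow> 'v + 'a \<times> nat
    \<Rightarrow> (('v + 'a \<times> nat) \<times> ('a \<times> nat) list \<Rightarrow> 'k::field) \<Rightarrow> (('v + 'a \<times> nat) \<times> ('a \<times> nat) list \<Rightarrow> 'k)"
  where "tail_coord Q A k m = (\<lambda>(v, zs). if v = tail_end Q k then m (k, tail_path A k @ zs) else 0)"

lemma tail_coord_apply:
  "tail_coord Q A k m (v, zs) = (if v = tail_end Q k then m (k, tail_path A k @ zs) else 0)"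
  by (simp add: tail_coord_def)

lemma module_hom_tail_coord: "module_hom fscale fscale (tail_coord Q A k)"
  by unfold_locales (auto simp: fun_eq_iff tail_coord_def fscale_def)

locale stretching =
  fixes Q :: "('v, 'a) quiver" and A :: nat
  assumes finite_Q: "finite_quiver Q" and A_pos: "1 \<le> A"
begin

abbreviation "Q' \<equiv> stretch_quiver A Q"
abbreviation "V \<equiv> Inl ` verts Q"
abbreviation "R' \<equiv> path_alg Q'"
abbreviation "E \<equiv> vertex_idem V"

lemma wf_Q': "wf_quiver Q'"
  by (rule wf_quiver_stretch[OF finite_Q])

lemma stretch_vert_cases:
  assumes "k \<in> verts Q'"
  obtains u where "k = Inl u" "u \<in> verts Q"
  | \<alpha> j where "k = Inr (\<alpha>, j)" "\<alpha> \<in> arrs Q" "1 \<le> j" "j < A"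
  using assms A_pos by (auto simp: stretch_quiver_simps)

lemma tail_path_Inr: "tail_path A (Inr (\<alpha>, j)) = map (\<lambda>i. (\<alpha>, i)) [Suc j..<Suc A]"
  by (simp add: tail_path_def del: upt_Suc)

lemma tail_path_valid: "k \<in> verts Q' \<Longrightarrow> valid_path Q' (k, tail_path A k)"
  by (erule stretch_vert_cases)
    (auto simp: tail_path_def valid_path_Nil stretch_quiver_simps dest: arrow_chain[OF finite_Q])

lemma tail_path_end: "k \<in> verts Q' \<Longrightarrow> path_end Q' (k, tail_path A k) = tail_end Q k"
  by (erule stretch_vert_cases)
    (auto simp: tail_path_def tail_end_def path_end_Nil dest: arrow_chain[OF finite_Q])

lemma tail_end_mem: "k \<in> verts Q' \<Longrightarrow> tail_end Q k \<in> V"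
  by (erule stretch_vert_cases) (use finite_Q in \<open>auto simp: tail_end_def finite_quiver_def\<close>)

lemma tail_path_prefix_not_mem:
  assumes "k \<in> verts Q'" "i < length (tail_path A k)"
  shows "path_end Q' (k, take i (tail_path A k)) \<notin> V"
  using assms(1)
proof (cases rule: stretch_vert_cases)
  case (2 \<alpha> j)
  then show ?thesis
    using arrow_chain[OF finite_Q 2(2), of j A] assms(2) by (simp add: tail_path_Inr del: upt_Suc)
qed (use assms(2) in \<open>simp add: tail_path_def\<close>)

lemma tail_path_prefix:
  assumes "k \<in> verts Q'" "valid_path Q' (k, zs)" "path_end Q' (k, zs) \<in> V"
  obtains zs' where "zs = tail_path A k @ zs'"
  using assms(1)
proof (cases rule: stretch_vert_cases)
  case (2 \<alpha> j)
  then show ?thesis using arrow_chain_prefix[OF finite_Q] assms that by (metis tail_path_Inr)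
qed (simp add: tail_path_def that)

lemma tail_coord_pmul:
  assumes k: "k \<in> verts Q'"
    and vanish: "\<And>i q. i < length (tail_path A k) \<Longrightarrow>
      f (k, take i (tail_path A k)) = 0 \<or> g (path_end Q' (k, take i (tail_path A k)), q) = 0"
  shows "tail_coord Q A k (pmul Q' f g) = pmul Q' (tail_coord Q A k f) g"
proof (rule ext, clarify)
  fix v zs
  let ?p = "tail_path A k"
  let ?t = "\<lambda>i. f (k, take i (?p @ zs)) * g (path_end Q' (k, take i (?p @ zs)), drop i (?p @ zs))"
  show "tail_coord Q A k (pmul Q' f g) (v, zs) = pmul Q' (tail_coord Q A k f) g (v, zs)"
  proof (cases "v = tail_end Q k")
    case True
    have "pmul Q' f g (k, ?p @ zs) = (\<Sum>i<length ?p. ?t i) + (\<Sum>j\<le>length zs. ?t (length ?p + j))"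
      unfolding pmul_def by (simp add: sum_atMost_add)
    also have "(\<Sum>i<length ?p. ?t i) = 0"
      using vanish by (intro sum.neutral) (auto simp del: upt_Suc)
    also have "(\<Sum>j\<le>length zs. ?t (length ?p + j)) = pmul Q' (tail_coord Q A k f) g (tail_end Q k, zs)"
      unfolding pmul_def prod.case
      by (intro sum.cong refl) (simp add: tail_coord_apply path_end_append tail_path_end[OF k])
    finally show ?thesis using True by (simp add: tail_coord_apply)
  qed (simp add: tail_coord_apply pmul_def)
qed

lemma tail_coord_path_alg:
  assumes k: "k \<in> verts Q'" and f: "f \<in> R'"
  shows "tail_coord Q A k f \<in> R'"
proof -
  have "{p. tail_coord Q A k f p \<noteq> 0}
      \<subseteq> (\<lambda>zs. (tail_end Q k, zs)) ` ((\<lambda>zs. (k, tail_path A k @ zs)) -` {p. f p \<noteq> 0})"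
    by (auto simp: tail_coord_def split: if_splits)
  moreover have "finite ((\<lambda>zs. (k, tail_path A k @ zs)) -` {p. f p \<noteq> 0})"
    using f by (intro finite_vimageI) (auto simp: path_alg_def inj_on_def)
  moreover have "valid_path Q' (v, zs)" if "tail_coord Q A k f (v, zs) \<noteq> 0" for v zs
  proof -
    from that have v: "v = tail_end Q k" and "f (k, tail_path A k @ zs) \<noteq> 0"
      by (auto simp: tail_coord_apply split: if_splits)
    then have "valid_path Q' (k, tail_path A k @ zs)" using f by (auto simp: path_alg_def)
    then show ?thesis by (simp add: v valid_path_append[OF wf_Q'] tail_path_end[OF k])
  qed
  ultimately show ?thesis unfolding path_alg_def by (auto elim: finite_subset dest: finite_imageI)
qed

lemma pmul_tail_path_tail_coord:
  assumes k: "k \<in> verts Q'"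
  shows "pmul Q' (delta (k, tail_path A k)) (tail_coord Q A k m)
    = (\<lambda>(v, zs). if v = k \<and> (\<exists>zs'. zs = tail_path A k @ zs') then m (v, zs) else 0)"
proof (rule ext, clarify)
  fix v zs
  let ?p = "tail_path A k"
  have "pmul Q' (delta (k, ?p)) (tail_coord Q A k m) (v, zs)
    = (\<Sum>i\<le>length zs. if i = length ?p then
        (if v = k \<and> take (length ?p) zs = ?p then m (k, ?p @ drop (length ?p) zs) else 0) else 0)"
    unfolding pmul_def prod.case
    by (intro sum.cong refl)
      (auto simp: delta_def tail_coord_apply tail_path_end[OF k] min_absorb2 dest: arg_cong[of _ _ length])
  also have "\<dots> = (if v = k \<and> (\<exists>zs'. zs = ?p @ zs') then m (v, zs) else 0)"
    by (auto simp: append_eq_conv_conj) (metis append_take_drop_id)+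
  finally show "pmul Q' (delta (k, ?p)) (tail_coord Q A k m) (v, zs)
    = (if v = k \<and> (\<exists>zs'. zs = ?p @ zs') then m (v, zs) else 0)" .
qed

lemma dual_basis_stretch:
  assumes m: "m \<in> R'" and ends: "\<And>p. m p \<noteq> 0 \<Longrightarrow> path_end Q' p \<in> V"
  shows "(\<Sum>k\<in>verts Q'. pmul Q' (delta (k, tail_path A k)) (tail_coord Q A k m)) = m"
proof (rule ext, clarify)
  fix v zs
  have fin: "finite (verts Q')" by (rule finite_verts_stretch[OF finite_Q])
  have "(\<Sum>k\<in>verts Q'. pmul Q' (delta (k, tail_path A k)) (tail_coord Q A k m)) (v, zs)
      = (\<Sum>k\<in>verts Q'. if k = v then (if \<exists>zs'. zs = tail_path A v @ zs' then m (v, zs) else 0) else 0)"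
    unfolding sum_fun_apply by (intro sum.cong refl) (auto simp: pmul_tail_path_tail_coord)
  also have "\<dots> = m (v, zs)"
  proof (cases "m (v, zs) = 0")
    case False
    then have val: "valid_path Q' (v, zs)" using m by (auto simp: path_alg_def)
    then have v: "v \<in> verts Q'" by (simp add: valid_path_def)
    obtain zs' where "zs = tail_path A v @ zs'" using tail_path_prefix[OF v val ends[OF False]] .
    then show ?thesis using v fin by auto
  qed (simp add: fin)
  finally show "(\<Sum>k\<in>verts Q'. pmul Q' (delta (k, tail_path A k)) (tail_coord Q A k m)) (v, zs) = m (v, zs)" .
qed

lemma tail_coord_pmul_right:
  assumes k: "k \<in> verts Q'" and c: "\<And>p. c p \<noteq> 0 \<Longrightarrow> fst p \<in> V"
  shows "tail_coord Q A k (pmul Q' m c) = pmul Q' (tail_coord Q A k m) c"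
  using c tail_path_prefix_not_mem[OF k] by (intro tail_coord_pmul[OF k]) (metis fst_conv)

lemma tail_coord_pmul_theta:
  assumes k: "k \<in> verts Q'" and g: "g \<in> path_alg Q"
  shows "tail_coord Q A k (pmul Q' (pmul Q' x (theta A g)) y) = pmul Q' (pmul Q' (tail_coord Q A k x) (theta A g)) y"
proof -
  have g_start: "\<And>p. theta A g p \<noteq> 0 \<Longrightarrow> fst p \<in> V"
    using theta_nonzero_start[OF g] by (metis prod.collapse)
  have "pmul Q' x (theta A g) (k, take i (tail_path A k)) = 0" if i: "i < length (tail_path A k)" for i
    unfolding pmul_def prod.case
  proof (intro sum.neutral ballI)
    fix j assume j: "j \<in> {..length (take i (tail_path A k))}"
    then have "path_end Q' (k, take j (tail_path A k)) \<notin> V"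
      using i by (intro tail_path_prefix_not_mem[OF k]) auto
    moreover have "take j (take i (tail_path A k)) = take j (tail_path A k)" using j i by (simp add: min_def)
    ultimately show "x (k, take j (take i (tail_path A k)))
        * theta A g (path_end Q' (k, take j (take i (tail_path A k))), drop j (take i (tail_path A k))) = 0"
      using g_start by (metis fst_conv mult_zero_right)
  qed
  then have "tail_coord Q A k (pmul Q' (pmul Q' x (theta A g)) y) = pmul Q' (tail_coord Q A k (pmul Q' x (theta A g))) y"
    by (intro tail_coord_pmul[OF k]) auto
  also have "tail_coord Q A k (pmul Q' x (theta A g)) = pmul Q' (tail_coord Q A k x) (theta A g)"
    by (rule tail_coord_pmul_right[OF k g_start])
  finally show ?thesis .
qed

lemma tail_coord_gen_ideal:
  assumes G: "G \<subseteq> path_alg Q" and k: "k \<in> verts Q'" and x: "x \<in> gen_ideal Q' (theta A ` G)"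
  shows "tail_coord Q A k x \<in> gen_ideal Q' (theta A ` G)"
proof -
  let ?X = "{pmul Q' (pmul Q' x g) y | x g y. x \<in> R' \<and> g \<in> theta A ` G \<and> y \<in> R'}"
  have "tail_coord Q A k ` ?X \<subseteq> ?X"
    using G tail_coord_pmul_theta[OF k] tail_coord_path_alg[OF k] by fastforce
  moreover have "tail_coord Q A k x \<in> fspace.span (tail_coord Q A k ` ?X)"
    using x unfolding gen_ideal_def lspan_eq_span module_hom.span_image[OF module_hom_tail_coord] by blast
  ultimately show ?thesis unfolding gen_ideal_def lspan_eq_span by (meson fspace.span_mono subsetD)
qed

lemma sum_vtx_eq_vertex_idem: "(\<lambda>p. \<Sum>v\<in>verts Q. vtx (Inl v) p) = E"
proof (rule ext, clarify)
  fix x zs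
  have "(\<Sum>v\<in>verts Q. vtx (Inl v) (x, zs)) = (\<Sum>v\<in>verts Q. if Inl v = x then (if zs = [] then 1 else 0) else 0)"
    by (intro sum.cong) (auto simp: vtx_def delta_def)
  also have "\<dots> = E (x, zs)"
    using finite_Q by (cases x) (auto simp: vertex_idem_def finite_quiver_def)
  finally show "(\<Sum>v\<in>verts Q. vtx (Inl v) (x, zs)) = E (x, zs)" .
qed

lemma tail_path_mem_left_mod:
  assumes k: "k \<in> verts Q'"
  shows "delta (k, tail_path A k) \<in> left_mod R' (pmul Q') E"
  unfolding left_mod_vertex_idem
  using tail_path_valid[OF k] tail_path_end[OF k] tail_end_mem[OF k] by (auto simp: path_alg_def delta_def)

lemma tail_coord_mem_corner:
  assumes k: "k \<in> verts Q'" and x: "x \<in> left_mod R' (pmul Q') E"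
  shows "tail_coord Q A k x \<in> corner R' (pmul Q') E"
proof -
  have "path_end Q' (v, zs) \<in> V" if nz: "tail_coord Q A k x (v, zs) \<noteq> 0" for v zs
  proof -
    from nz have v: "v = tail_end Q k" and "x (k, tail_path A k @ zs) \<noteq> 0"
      by (auto simp: tail_coord_apply split: if_splits)
    then have "path_end Q' (k, tail_path A k @ zs) \<in> V" using x unfolding left_mod_vertex_idem by blast
    then show ?thesis by (simp add: v path_end_append tail_path_end[OF k])
  qed
  moreover have "tail_coord Q A k x \<in> R'"
    using x unfolding left_mod_vertex_idem by (auto intro: tail_coord_path_alg[OF k])
  ultimately show ?thesis
    unfolding corner_vertex_idem using tail_end_mem[OF k] by (auto simp: tail_coord_apply split: if_splits)
qed

lemma tail_coord_mem_right_mod: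
  assumes k: "k \<in> verts Q'" and x: "x \<in> R'"
  shows "tail_coord Q A k x \<in> right_mod R' (pmul Q') E"
  unfolding right_mod_vertex_idem using tail_coord_path_alg[OF k x] tail_end_mem[OF k]
  by (auto simp: tail_coord_apply split: if_splits)

lemma tail_path_mul_tail_coord_mem:
  assumes k: "k \<in> verts Q'" and m: "m \<in> left_mod R' (pmul Q') E"
  shows "pmul Q' (delta (k, tail_path A k)) (tail_coord Q A k m) \<in> left_mod R' (pmul Q') E"
proof -
  have "pmul Q' (delta (k, tail_path A k)) (tail_coord Q A k m)
    = (\<lambda>p. if fst p = k \<and> (\<exists>zs'. snd p = tail_path A k @ zs') then m p else 0)"
    unfolding pmul_tail_path_tail_coord[OF k] by (auto simp: fun_eq_iff)
  then show ?thesis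
    using m unfolding left_mod_vertex_idem by (auto intro: path_alg_restrict split: if_splits)
qed

lemma corner_dual_basis_stretch:
  fixes G :: "('v \<times> 'a list \<Rightarrow> 'k::field) set"
  assumes G: "G \<subseteq> path_alg Q"
  shows "corner_dual_basis R' (pmul Q') E (gen_ideal Q' (theta A ` G))
           (verts Q') (\<lambda>k. delta (k, tail_path A k)) (tail_coord Q A)"
proof (rule corner_dual_basis.intro)
  show "fspace.subspace (left_mod R' (pmul Q') E)"
    unfolding left_mod_vertex_idem by (rule subspace_path_alg_restrict)
  show "fspace.subspace (corner R' (pmul Q') E)"
    unfolding corner_vertex_idem by (rule subspace_path_alg_restrict)
  show "fspace.subspace (right_mod R' (pmul Q') E)"
    unfolding right_mod_vertex_idem by (rule subspace_path_alg_restrict)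
  show "tail_coord Q A k x \<in> gen_ideal Q' (theta A ` G)"
    if "k \<in> verts Q'" and "x \<in> gen_ideal Q' (theta A ` G)" for k x
    using G that by (rule tail_coord_gen_ideal)
  show "(\<Sum>k\<in>verts Q'. pmul Q' (delta (k, tail_path A k)) (tail_coord Q A k m)) = m"
    if "m \<in> left_mod R' (pmul Q') E" for m
    using that unfolding left_mod_vertex_idem by (intro dual_basis_stretch) auto
  show "tail_coord Q A k (pmul Q' m c) = pmul Q' (tail_coord Q A k m) c"
    if "k \<in> verts Q'" and "c \<in> corner R' (pmul Q') E" for k m c
    using that unfolding corner_vertex_idem by (intro tail_coord_pmul_right) auto
  show "tail_coord Q A k (pmul Q' m n) = pmul Q' (tail_coord Q A k m) n"
    if "k \<in> verts Q'" and "n \<in> right_mod R' (pmul Q') E" for k m n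
    using that unfolding right_mod_vertex_idem by (intro tail_coord_pmul_right) auto
  show "tail_coord Q A k (pmul Q' m n) \<in> right_mod R' (pmul Q') E"
    if k: "k \<in> verts Q'" and "m \<in> left_mod R' (pmul Q') E" and "n \<in> right_mod R' (pmul Q') E" for k m n
    by (intro tail_coord_mem_right_mod[OF k] path_alg_pmul[OF wf_Q'])
      (use that in \<open>auto simp: left_mod_vertex_idem right_mod_vertex_idem\<close>)
qed (use finite_verts_stretch[OF finite_Q] tail_path_mem_left_mod tail_coord_mem_corner
      module_hom_tail_coord tail_path_mul_tail_coord_mem in auto)

end

theorem theorem2p2:
  fixes Q :: "('v, 'a) quiver"
    and G :: "('v \<times> 'a list \<Rightarrow> 'k::field) set"
    and A :: nat
  assumes "finite_quiver Q"
    and "finite G"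
    and "G \<subseteq> path_alg Q"
    and "\<forall>g\<in>G. uniform Q g"
    and "admissible Q (gen_ideal Q G)"
    and "\<forall>G'. G' \<subset> G \<longrightarrow> gen_ideal Q G' \<noteq> gen_ideal Q G"
    and "A \<ge> 1"
  shows "stratifying (path_alg (stretch_quiver A Q)) (pmul (stretch_quiver A Q))
           (gen_ideal (stretch_quiver A Q) (theta A ` G))
           (\<lambda>p. \<Sum>v\<in>verts Q. vtx (Inl v) p)"
proof -
  interpret stretching Q A using assms(1,7) by unfold_locales
  interpret corner_dual_basis R' "pmul Q'" E "gen_ideal Q' (theta A ` G)"
    "verts Q'" "\<lambda>k. delta (k, tail_path A k)" "tail_coord Q A"
    by (rule corner_dual_basis_stretch[OF assms(3)])
  have mid: "pmul Q' (pmul Q' x E) (pmul Q' E x') = pmul Q' (pmul Q' x E) x'"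
    for x x' :: "('v + 'a \<times> nat) \<times> ('a \<times> nat) list \<Rightarrow> 'k"
    by (rule pmul_vertex_idem_middle) (simp add: pmul_vertex_idem_right split: if_splits)
  have zero: "0 \<in> gen_ideal Q' (theta A ` G)"
    by (simp add: gen_ideal_def lspan_eq_span fspace.span_zero)
  show ?thesis
    unfolding sum_vtx_eq_vertex_idem stratifying_def
    using mult_map_onto[OF mid zero] mult_map_injective bar_complex_exact by (intro conjI) blast+
qed

end
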